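(* Let $Z$ be a stationary and isotropic centered unit variance Gaussian random field on $\mathbb{R}^d$ with covariance $\mathbb{E}[Z(x)Z(y)]=R(\|x-y\|)$, $R:[0,\infty)\rightarrow\mathbb{R}$. Let $\Xi_0=\{x:\,Z(x)\geq0\}$. Then for $r\in[0,\infty)$ the second-order characteristics of $(\Xi_0,Z)$ are \begin{align*} E(r)&=\sqrt{\tfrac{\pi}{2}}\,\frac{1+R(r)}{\arcsin(R(r))+\frac{\pi}{2}},\\ \mathrm{cov}(r)&=R(r)+\frac{\sqrt{1-R(r)^2}}{\arcsin(R(r))+\frac{\pi}{2}}-\frac{\pi}{2}\frac{(1+R(r))^2}{(\arcsin(R(r))+\frac{\pi}{2})^2},\\ \gamma(r)&=(1-R(r))\left(1-\frac{\sqrt{1-R(r)^2}}{\arcsin(R(r))+\frac{\pi}{2}}\right),\\ k_{mm}(r)&=\frac{\pi}{2}\left(R(r)+\frac{\sqrt{1-R(r)^2}}{\arcsin(R(r))+\frac{\pi}{2}}\right),\\ \mathrm{cor}(r)&=\frac{R(r)(\arcsin R(r)+\frac{\pi}{2})^2+\sqrt{1-R(r)^2}(\arcsin R(r)+\frac{\pi}{2})-\frac{\pi}{2}(1+R(r))^2}{(\arcsin R(r)+\frac{\pi}{2})^2+R(r)\sqrt{1-R(r)^2}(\arcsin R(r)+\frac{\pi}{2})-\frac{\pi}{2}(1+R(r))^2}. \end{align*}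
   Context: For $h\in\mathbb{R}^d$ with $\|h\|=r$ let $A_h=\{Z(o)\geq0,\,Z(h)\geq0\}$ ($o$ the origin). The characteristics are the conditional moments: $\kappa_e(h)=\mathbb{E}[Z(o)\mid A_h]$, $\kappa_c(h)=\mathbb{E}[Z(o)Z(h)\mid A_h]$, $\kappa_v(h)=\mathbb{E}[Z(o)^2\mid A_h]$; $E(r)=\kappa_e(h)$; mark variogram $\gamma(r)=\tfrac12(\kappa_v(h)+\kappa_v(-h))-\kappa_c(h)$; mark covariance $\mathrm{cov}(r)=\kappa_c(h)-\kappa_e(h)\kappa_e(-h)$; mark correlation $\mathrm{cor}(r)=\mathrm{cov}(r)/\big((\kappa_v(h)-\kappa_e(h)^2)^{1/2}(\kappa_v(-h)-\kappa_e(-h)^2)^{1/2}\big)$; Stoyan's function $k_{mm}(r)=\overline{m}^{-2}\kappa_c(h)$ with mean mark $\overline{m}=\mathbb{E}[Z(o)\mid Z(o)\geq0]$. (These are the paper's characteristics of the random marked set $(\Xi_0,Z)$, which reduce to these conditional expectations since $\mathbb{P}(A_h)>0$.) *)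

theory Defs
  imports "HOL-Probability.Probability"
begin

definition real_normal_rv :: "'w measure \<Rightarrow> ('w \<Rightarrow> real) \<Rightarrow> bool" where
  "real_normal_rv M X \<longleftrightarrow> X \<in> borel_measurable M \<and>
     (\<exists>\<mu> \<sigma>::real. \<sigma> \<ge> 0 \<and>
        (if \<sigma> = 0 then (AE \<omega> in M. X \<omega> = \<mu>)
         else distributed M lborel X (\<lambda>x. ennreal (normal_density \<mu> \<sigma> x))))"

text \<open>Gaussian random field: all finite-dimensional distributions are Gaussian,
  i.e. every finite linear combination of field values is normally distributed.\<close>
definition gaussian_field :: "'w measure \<Rightarrow> ('a \<Rightarrow> 'w \<Rightarrow> real) \<Rightarrow> bool" where
  "gaussian_field M Z \<longleftrightarrow> prob_space M \<and> (\<forall>x. Z x \<in> borel_measurable M) \<and>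
     (\<forall>F (c::'a \<Rightarrow> real). finite F \<longrightarrow> real_normal_rv M (\<lambda>\<omega>. \<Sum>x\<in>F. c x * Z x \<omega>))"

definition cond_exp_event :: "'w measure \<Rightarrow> ('w \<Rightarrow> real) \<Rightarrow> 'w set \<Rightarrow> real" where
  "cond_exp_event M X A = (\<integral>\<omega>. indicator A \<omega> * X \<omega> \<partial>M) / measure M A"

definition event_A :: "'w measure \<Rightarrow> ('a::real_vector \<Rightarrow> 'w \<Rightarrow> real) \<Rightarrow> 'a \<Rightarrow> 'w set" where
  "event_A M Z h = {\<omega> \<in> space M. Z 0 \<omega> \<ge> 0 \<and> Z h \<omega> \<ge> 0}"

definition kappa_e :: "'w measure \<Rightarrow> ('a::real_vector \<Rightarrow> 'w \<Rightarrow> real) \<Rightarrow> 'a \<Rightarrow> real" where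
  "kappa_e M Z h = cond_exp_event M (Z 0) (event_A M Z h)"

definition kappa_c :: "'w measure \<Rightarrow> ('a::real_vector \<Rightarrow> 'w \<Rightarrow> real) \<Rightarrow> 'a \<Rightarrow> real" where
  "kappa_c M Z h = cond_exp_event M (\<lambda>\<omega>. Z 0 \<omega> * Z h \<omega>) (event_A M Z h)"

definition kappa_v :: "'w measure \<Rightarrow> ('a::real_vector \<Rightarrow> 'w \<Rightarrow> real) \<Rightarrow> 'a \<Rightarrow> real" where
  "kappa_v M Z h = cond_exp_event M (\<lambda>\<omega>. (Z 0 \<omega>)\<^sup>2) (event_A M Z h)"

definition mark_E :: "'w measure \<Rightarrow> ('a::real_vector \<Rightarrow> 'w \<Rightarrow> real) \<Rightarrow> 'a \<Rightarrow> real" where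
  "mark_E M Z h = kappa_e M Z h"

definition mark_variogram :: "'w measure \<Rightarrow> ('a::real_vector \<Rightarrow> 'w \<Rightarrow> real) \<Rightarrow> 'a \<Rightarrow> real" where
  "mark_variogram M Z h = (kappa_v M Z h + kappa_v M Z (-h)) / 2 - kappa_c M Z h"

definition mark_cov :: "'w measure \<Rightarrow> ('a::real_vector \<Rightarrow> 'w \<Rightarrow> real) \<Rightarrow> 'a \<Rightarrow> real" where
  "mark_cov M Z h = kappa_c M Z h - kappa_e M Z h * kappa_e M Z (-h)"

definition mark_cor :: "'w measure \<Rightarrow> ('a::real_vector \<Rightarrow> 'w \<Rightarrow> real) \<Rightarrow> 'a \<Rightarrow> real" where
  "mark_cor M Z h = mark_cov M Z h /
     (sqrt (kappa_v M Z h - (kappa_e M Z h)\<^sup>2) * sqrt (kappa_v M Z (-h) - (kappa_e M Z (-h))\<^sup>2))"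

definition mean_mark :: "'w measure \<Rightarrow> ('a::real_vector \<Rightarrow> 'w \<Rightarrow> real) \<Rightarrow> real" where
  "mean_mark M Z = cond_exp_event M (Z 0) {\<omega> \<in> space M. Z 0 \<omega> \<ge> 0}"

definition stoyan_kmm :: "'w measure \<Rightarrow> ('a::real_vector \<Rightarrow> 'w \<Rightarrow> real) \<Rightarrow> 'a \<Rightarrow> real" where
  "stoyan_kmm M Z h = kappa_c M Z h / (mean_mark M Z)\<^sup>2"

end

theory Submission
  imports Defs
begin

text \<open>Write \<open>\<rho> = R r\<close>, \<open>a = sqrt ((1 + \<rho>) / 2)\<close> and \<open>b = sqrt ((1 - \<rho>) / 2)\<close>. The pair
  \<open>(Z o, Z h)\<close> has the same law as \<open>(a U + b V, a U - b V)\<close> for independent standard normal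
  \<open>U, V\<close>; its law is identified through Levy's uniqueness theorem applied to laws reweighted
  by bounded densities. The event \<open>A\<^sub>h\<close> becomes the wedge \<open>b \<bar>V\<bar> \<le> a U\<close> of opening angle
  \<open>arcsin \<rho> + pi / 2\<close>, so \<open>\<kappa>\<^sub>e\<close>, \<open>\<kappa>\<^sub>c\<close> and \<open>\<kappa>\<^sub>v\<close> reduce to Gaussian integrals over a wedge,
  evaluated as iterated integrals. The mark characteristics are rational
  expressions in these three conditional moments.\<close>

section \<open>Weighted laws and uniqueness of two-dimensional laws\<close>

lemma (in finite_measure) integrable_bounded:
  fixes f :: "'a \<Rightarrow> real"
  assumes "f \<in> borel_measurable M" and "\<And>\<omega>. \<omega> \<in> space M \<Longrightarrow> \<bar>f \<omega>\<bar> \<le> K"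
  shows "integrable M f"
  by (rule integrable_const_bound[where B=K]) (use assms in \<open>auto intro!: AE_I2\<close>)

lemma (in finite_measure) integral_scaleR_iexp:
  fixes f g :: "'a \<Rightarrow> real"
  assumes [measurable]: "f \<in> borel_measurable M" "g \<in> borel_measurable M"
    and bound: "\<And>\<omega>. \<omega> \<in> space M \<Longrightarrow> \<bar>g \<omega>\<bar> \<le> K"
  shows "(\<integral>\<omega>. g \<omega> *\<^sub>R iexp (f \<omega>) \<partial>M) =
    complex_of_real (\<integral>\<omega>. g \<omega> * cos (f \<omega>) \<partial>M) + \<i> * complex_of_real (\<integral>\<omega>. g \<omega> * sin (f \<omega>) \<partial>M)"
proof -
  have "integrable M (\<lambda>\<omega>. g \<omega> * cos (f \<omega>))" "integrable M (\<lambda>\<omega>. g \<omega> * sin (f \<omega>))"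
    by (intro integrable_bounded[where K=K];
        auto simp: abs_mult intro: order_trans[OF mult_left_le] bound)+
  moreover have "(\<lambda>\<omega>. g \<omega> *\<^sub>R iexp (f \<omega>)) =
      (\<lambda>\<omega>. complex_of_real (g \<omega> * cos (f \<omega>)) + \<i> * complex_of_real (g \<omega> * sin (f \<omega>)))"
    by (auto simp: cis_conv_exp[symmetric] cis.ctr complex_eq_iff)
  ultimately show ?thesis
    by (simp del: of_real_mult)
qed

lemma integral_distr_density:
  fixes F :: "real \<Rightarrow> 'b::{banach, second_countable_topology}"
  assumes [measurable]: "Y \<in> borel_measurable M" "w \<in> borel_measurable M" "F \<in> borel_measurable borel"
    and nonneg: "\<And>\<omega>. \<omega> \<in> space M \<Longrightarrow> 0 \<le> w \<omega>"
  shows "(\<integral>x. F x \<partial>distr (density M (\<lambda>\<omega>. ennreal (w \<omega>))) borel Y) = (\<integral>\<omega>. w \<omega> *\<^sub>R F (Y \<omega>) \<partial>M)"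
proof -
  have "(\<integral>x. F x \<partial>distr (density M (\<lambda>\<omega>. ennreal (w \<omega>))) borel Y) =
      (\<integral>\<omega>. F (Y \<omega>) \<partial>density M (\<lambda>\<omega>. ennreal (w \<omega>)))"
    by (rule integral_distr) simp_all
  also have "\<dots> = (\<integral>\<omega>. w \<omega> *\<^sub>R F (Y \<omega>) \<partial>M)"
    by (rule integral_density) (auto intro!: AE_I2 nonneg)
  finally show ?thesis .
qed

lemma (in prob_space) weighted_law:
  fixes g Y :: "'a \<Rightarrow> real"
  assumes [measurable]: "g \<in> borel_measurable M" "Y \<in> borel_measurable M"
    and g: "\<And>\<omega>. \<omega> \<in> space M \<Longrightarrow> 0 \<le> g \<omega> \<and> g \<omega> \<le> K"
    and mass: "(\<integral>\<omega>. g \<omega> \<partial>M) = m" and m: "m > 0"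
  defines "\<nu> \<equiv> distr (density M (\<lambda>\<omega>. ennreal (g \<omega> / m))) borel Y"
  shows "real_distribution \<nu>"
    and "char \<nu> t = (complex_of_real (\<integral>\<omega>. g \<omega> * cos (t * Y \<omega>) \<partial>M)
                      + \<i> * complex_of_real (\<integral>\<omega>. g \<omega> * sin (t * Y \<omega>) \<partial>M)) / m"
    and "B \<in> sets borel \<Longrightarrow> measure \<nu> B = (\<integral>\<omega>. g \<omega> * indicator B (Y \<omega>) \<partial>M) / m"
proof -
  have integral_\<nu>: "(\<integral>x. F x \<partial>\<nu>) = (\<integral>\<omega>. (g \<omega> / m) *\<^sub>R F (Y \<omega>) \<partial>M)"
    if [measurable]: "F \<in> borel_measurable borel" for F :: "real \<Rightarrow>
        'c::{banach, second_countable_topology}"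
    unfolding \<nu>_def by (rule integral_distr_density) (use m g in auto)
  have "integrable M g"
    by (rule integrable_bounded[where K=K]) (use g in auto)
  then have "emeasure (density M (\<lambda>\<omega>. ennreal (g \<omega> / m))) (space M) = 1"
    using g m mass by (simp add: emeasure_density nn_integral_eq_integral)
  then have "prob_space (density M (\<lambda>\<omega>. ennreal (g \<omega> / m)))"
    by (intro prob_spaceI) simp
  then have "prob_space \<nu>"
    unfolding \<nu>_def by (rule prob_space.prob_space_distr) simp
  then show "real_distribution \<nu>"
    by (simp add: real_distribution_def real_distribution_axioms_def \<nu>_def)
  have "char \<nu> t = (\<integral>\<omega>. (g \<omega> / m) *\<^sub>R iexp (t * Y \<omega>) \<partial>M)"
    unfolding char_def by (rule integral_\<nu>) simp
  also have "\<dots> = complex_of_real (\<integral>\<omega>. g \<omega> / m * cos (t * Y \<omega>) \<partial>M)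
      + \<i> * complex_of_real (\<integral>\<omega>. g \<omega> / m * sin (t * Y \<omega>) \<partial>M)"
    by (rule integral_scaleR_iexp[where K="K / m"]) (use m g in \<open>auto intro!: divide_right_mono\<close>)
  finally show "char \<nu> t = (complex_of_real (\<integral>\<omega>. g \<omega> * cos (t * Y \<omega>) \<partial>M)
      + \<i> * complex_of_real (\<integral>\<omega>. g \<omega> * sin (t * Y \<omega>) \<partial>M)) / m"
    by (simp add: add_divide_distrib)
  assume [measurable]: "B \<in> sets borel"
  have "space \<nu> = UNIV"
    by (simp add: \<nu>_def)
  then have "measure \<nu> B = (\<integral>x. indicator B x \<partial>\<nu>)"
    by simp
  also have "\<dots> = (\<integral>\<omega>. (g \<omega> / m) *\<^sub>R indicator B (Y \<omega>) \<partial>M)"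
    by (rule integral_\<nu>) simp
  finally show "measure \<nu> B = (\<integral>\<omega>. g \<omega> * indicator B (Y \<omega>) \<partial>M) / m"
    by simp
qed

lemma (in prob_space) weighted_integral_indicator_eq_0:
  fixes g Y :: "'a \<Rightarrow> real"
  assumes [measurable]: "g \<in> borel_measurable M" "Y \<in> borel_measurable M" "B \<in> sets borel"
    and g: "\<And>\<omega>. \<omega> \<in> space M \<Longrightarrow> 0 \<le> g \<omega> \<and> g \<omega> \<le> K"
    and mass: "(\<integral>\<omega>. g \<omega> \<partial>M) = 0"
  shows "(\<integral>\<omega>. g \<omega> * indicator B (Y \<omega>) \<partial>M) = 0"
proof -
  have "integrable M g"
    by (rule integrable_bounded[where K=K]) (use g in auto)
  moreover have "integrable M (\<lambda>\<omega>. g \<omega> * indicator B (Y \<omega>))"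
    by (rule integrable_bounded[where K=K]) (auto split: split_indicator dest: g intro: order_trans)
  ultimately have int: "integrable M (\<lambda>\<omega>. g \<omega> * indicator B (Y \<omega>))" "integrable M g"
    by auto
  have "(\<integral>\<omega>. g \<omega> * indicator B (Y \<omega>) \<partial>M) \<le> (\<integral>\<omega>. g \<omega> \<partial>M)"
    by (rule integral_mono[OF int]) (use g in \<open>auto split: split_indicator\<close>)
  moreover have "0 \<le> (\<integral>\<omega>. g \<omega> * indicator B (Y \<omega>) \<partial>M)"
    by (rule integral_nonneg_AE) (use g in \<open>auto intro!: AE_I2\<close>)
  ultimately show ?thesis
    using mass by simp
qed

lemma weighted_laws_eq:
  fixes g1 Y1 :: "'a \<Rightarrow> real" and g2 Y2 :: "'b \<Rightarrow> real"
  assumes "prob_space M1" "prob_space M2"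
    and [measurable]: "g1 \<in> borel_measurable M1" "Y1 \<in> borel_measurable M1"
      "g2 \<in> borel_measurable M2" "Y2 \<in> borel_measurable M2" "B \<in> sets borel"
    and g1: "\<And>\<omega>. \<omega> \<in> space M1 \<Longrightarrow> 0 \<le> g1 \<omega> \<and> g1 \<omega> \<le> K"
    and g2: "\<And>\<omega>. \<omega> \<in> space M2 \<Longrightarrow> 0 \<le> g2 \<omega> \<and> g2 \<omega> \<le> K"
    and cos_eq: "\<And>t. (\<integral>\<omega>. g1 \<omega> * cos (t * Y1 \<omega>) \<partial>M1) = (\<integral>\<omega>. g2 \<omega> * cos (t * Y2 \<omega>) \<partial>M2)"
    and sin_eq: "\<And>t. (\<integral>\<omega>. g1 \<omega> * sin (t * Y1 \<omega>) \<partial>M1) = (\<integral>\<omega>. g2 \<omega> * sin (t * Y2 \<omega>) \<partial>M2)"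
  shows "(\<integral>\<omega>. g1 \<omega> * indicator B (Y1 \<omega>) \<partial>M1) = (\<integral>\<omega>. g2 \<omega> * indicator B (Y2 \<omega>) \<partial>M2)"
proof -
  interpret M1: prob_space M1 by fact
  interpret M2: prob_space M2 by fact
  define m where "m = (\<integral>\<omega>. g1 \<omega> \<partial>M1)"
  have m2: "(\<integral>\<omega>. g2 \<omega> \<partial>M2) = m"
    using cos_eq[of 0] by (simp add: m_def)
  have "0 \<le> m"
    unfolding m_def by (rule integral_nonneg_AE) (use g1 in \<open>auto intro!: AE_I2\<close>)
  then consider "m = 0" | "m > 0"
    by linarith
  then show ?thesis
  proof cases
    case 1
    have "(\<integral>\<omega>. g1 \<omega> * indicator B (Y1 \<omega>) \<partial>M1) = 0"
      by (rule M1.weighted_integral_indicator_eq_0[where K=K]) (use g1 1 m_def in auto)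
    moreover have "(\<integral>\<omega>. g2 \<omega> * indicator B (Y2 \<omega>) \<partial>M2) = 0"
      by (rule M2.weighted_integral_indicator_eq_0[where K=K]) (use g2 1 m2 in auto)
    ultimately show ?thesis
      by simp
  next
    case 2
    note \<nu>1 = M1.weighted_law[OF _ _ g1 m_def[symmetric] 2]
    note \<nu>2 = M2.weighted_law[OF _ _ g2 m2 2]
    have "char (distr (density M1 (\<lambda>\<omega>. ennreal (g1 \<omega> / m))) borel Y1) =
        char (distr (density M2 (\<lambda>\<omega>. ennreal (g2 \<omega> / m))) borel Y2)"
      using \<nu>1(2) \<nu>2(2) cos_eq sin_eq by auto
    with \<nu>1(1) \<nu>2(1) have "distr (density M1 (\<lambda>\<omega>. ennreal (g1 \<omega> / m))) borel Y1 =
        distr (density M2 (\<lambda>\<omega>. ennreal (g2 \<omega> / m))) borel Y2"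
      by (intro Levy_uniqueness) auto
    then show ?thesis
      using \<nu>1(3)[where B=B and Y=Y1] \<nu>2(3)[where B=B and Y=Y2] 2 by simp
  qed
qed

lemma (in prob_space) weighted_trig_integrals:
  fixes X Y :: "'a \<Rightarrow> real"
  assumes [measurable]: "X \<in> borel_measurable M" "Y \<in> borel_measurable M"
  defines "C a b \<equiv> \<integral>\<omega>. cos (a * X \<omega> + b * Y \<omega>) \<partial>M"
    and "S a b \<equiv> \<integral>\<omega>. sin (a * X \<omega> + b * Y \<omega>) \<partial>M"
  shows "(\<integral>\<omega>. (1 + cos (s * X \<omega>)) * cos (t * Y \<omega>) \<partial>M) = C 0 t + (C s t + C s (-t)) / 2"
    and "(\<integral>\<omega>. (1 + cos (s * X \<omega>)) * sin (t * Y \<omega>) \<partial>M) = S 0 t + (S s t - S s (-t)) / 2"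
    and "(\<integral>\<omega>. (1 + sin (s * X \<omega>)) * cos (t * Y \<omega>) \<partial>M) = C 0 t + (S s t + S s (-t)) / 2"
    and "(\<integral>\<omega>. (1 + sin (s * X \<omega>)) * sin (t * Y \<omega>) \<partial>M) = S 0 t + (C s (-t) - C s t) / 2"
proof -
  have [simp]: "integrable M (\<lambda>\<omega>. cos (f \<omega>))" "integrable M (\<lambda>\<omega>. sin (f \<omega>))"
    if "f \<in> borel_measurable M" for f :: "'a \<Rightarrow> real"
    by (intro integrable_bounded[where K=1]; use that in simp)+
  have "(1 + cos a) * cos b = cos (0 + b) + (cos (a + b) + cos (a + - b)) / 2"
    and "(1 + cos a) * sin b = sin (0 + b) + (sin (a + b) - sin (a + - b)) / 2"
    and "(1 + sin a) * cos b = cos (0 + b) + (sin (a + b) + sin (a + - b)) / 2"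
    and "(1 + sin a) * sin b = sin (0 + b) + (cos (a + - b) - cos (a + b)) / 2" for a b :: real
    by (simp_all add: sin_add cos_add sin_diff cos_diff algebra_simps)
  then show "(\<integral>\<omega>. (1 + cos (s * X \<omega>)) * cos (t * Y \<omega>) \<partial>M) = C 0 t + (C s t + C s (-t)) / 2"
    and "(\<integral>\<omega>. (1 + cos (s * X \<omega>)) * sin (t * Y \<omega>) \<partial>M) = S 0 t + (S s t - S s (-t)) / 2"
    and "(\<integral>\<omega>. (1 + sin (s * X \<omega>)) * cos (t * Y \<omega>) \<partial>M) = C 0 t + (S s t + S s (-t)) / 2"
    and "(\<integral>\<omega>. (1 + sin (s * X \<omega>)) * sin (t * Y \<omega>) \<partial>M) = S 0 t + (C s (-t) - C s t) / 2"
    unfolding C_def S_def by (simp_all add: Bochner_Integration.integral_add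
        Bochner_Integration.integral_diff)
qed

lemma (in prob_space) integral_one_plus_mult_indicator:
  fixes X Y :: "'a \<Rightarrow> real" and f :: "real \<Rightarrow> real"
  assumes [measurable]: "X \<in> borel_measurable M" "Y \<in> borel_measurable M" "B \<in> sets borel"
    "f \<in> borel_measurable borel" and bound: "\<And>x. \<bar>f x\<bar> \<le> 1"
  shows "(\<integral>\<omega>. (1 + f (X \<omega>)) * indicator B (Y \<omega>) \<partial>M) =
    (\<integral>\<omega>. indicator B (Y \<omega>) \<partial>M) + (\<integral>\<omega>. indicator B (Y \<omega>) * f (X \<omega>) \<partial>M)"
proof -
  have "integrable M (\<lambda>\<omega>. indicator B (Y \<omega>) * f (X \<omega>))" "integrable M (\<lambda>\<omega>. indicator B (Y \<omega>)
      :: real)"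
    by (intro integrable_bounded[where K=1]; auto simp: abs_mult bound split: split_indicator)+
  moreover have "(\<lambda>\<omega>. (1 + f (X \<omega>)) * indicator B (Y \<omega>)) =
      (\<lambda>\<omega>. indicator B (Y \<omega>) + indicator B (Y \<omega>) * f (X \<omega>))"
    by (auto simp: algebra_simps)
  ultimately show ?thesis
    by (simp only:) (rule Bochner_Integration.integral_add)
qed

lemma (in prob_space) emeasure_distr_pair_Times:
  fixes X Y :: "'a \<Rightarrow> real"
  assumes [measurable]: "X \<in> borel_measurable M" "Y \<in> borel_measurable M" "A \<in> sets borel" "B \<in> sets borel"
  shows "emeasure (distr M (borel \<Otimes>\<^sub>M borel) (\<lambda>\<omega>. (X \<omega>, Y \<omega>))) (A \<times> B) =
    ennreal (\<integral>\<omega>. indicator B (Y \<omega>) * indicator A (X \<omega>) \<partial>M)"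
proof -
  have "emeasure (distr M (borel \<Otimes>\<^sub>M borel) (\<lambda>\<omega>. (X \<omega>, Y \<omega>))) (A \<times> B) =
      emeasure M {\<omega> \<in> space M. X \<omega> \<in> A \<and> Y \<omega> \<in> B}"
    by (subst emeasure_distr) (auto intro!: arg_cong[where f="emeasure M"])
  also have "\<dots> = ennreal (\<integral>\<omega>. indicator {\<omega> \<in> space M. X \<omega> \<in> A \<and> Y \<omega> \<in> B} \<omega> \<partial>M)"
    by (simp add: emeasure_eq_measure)
  also have "(\<integral>\<omega>. indicator {\<omega> \<in> space M. X \<omega> \<in> A \<and> Y \<omega> \<in> B} \<omega> \<partial>M) =
      (\<integral>\<omega>. indicator B (Y \<omega>) * indicator A (X \<omega>) \<partial>M :: real)"
    by (rule Bochner_Integration.integral_cong) (auto split: split_indicator)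
  finally show ?thesis .
qed

lemma distr_pair_eq_if_rectangle_integrals_eq:
  fixes X1 Y1 :: "'a \<Rightarrow> real" and X2 Y2 :: "'b \<Rightarrow> real"
  assumes "prob_space M1" "prob_space M2"
    and [measurable]: "X1 \<in> borel_measurable M1" "Y1 \<in> borel_measurable M1"
      "X2 \<in> borel_measurable M2" "Y2 \<in> borel_measurable M2"
    and rectangle_eq: "\<And>A B. A \<in> sets borel \<Longrightarrow> B \<in> sets borel \<Longrightarrow>
      (\<integral>\<omega>. indicator B (Y1 \<omega>) * indicator A (X1 \<omega>) \<partial>M1) =
      (\<integral>\<omega>. (indicator B (Y2 \<omega>) * indicator A (X2 \<omega>) :: real) \<partial>M2)"
  shows "distr M1 (borel \<Otimes>\<^sub>M borel) (\<lambda>\<omega>. (X1 \<omega>, Y1 \<omega>)) =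
      distr M2 (borel \<Otimes>\<^sub>M borel) (\<lambda>\<omega>. (X2 \<omega>, Y2 \<omega>))"
proof -
  interpret M1: prob_space M1 by fact
  interpret M2: prob_space M2 by fact
  let ?E = "{a \<times> b |a b. a \<in> sets (borel::real measure) \<and> b \<in> sets (borel::real measure)}"
  let ?P = "(borel::real measure) \<Otimes>\<^sub>M (borel::real measure)"
  show ?thesis
  proof (rule measure_eqI_generator_eq[OF Int_stable_pair_measure_generator[of borel borel],
        where \<Omega>="space ?P" and A="\<lambda>_. UNIV"])
    show "?E \<subseteq> Pow (space ?P)"
      by (auto simp: space_pair_measure)
    show "sets (distr M1 ?P (\<lambda>\<omega>. (X1 \<omega>, Y1 \<omega>))) = sigma_sets (space ?P) ?E"
      and "sets (distr M2 ?P (\<lambda>\<omega>. (X2 \<omega>, Y2 \<omega>))) = sigma_sets (space ?P) ?E"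
      by (simp_all add: sets_pair_measure space_pair_measure)
    show "range (\<lambda>_. UNIV) \<subseteq> ?E"
      by (auto intro!: exI[of _ UNIV])
    show "(\<Union>i. UNIV) = space ?P"
      by (simp add: space_pair_measure)
    show "emeasure (distr M1 ?P (\<lambda>\<omega>. (X1 \<omega>, Y1 \<omega>))) UNIV \<noteq> \<infinity>"
      using M1.emeasure_distr_pair_Times[of X1 Y1 UNIV UNIV] by simp
  next
    fix E assume "E \<in> ?E"
    then obtain A B where "E = A \<times> B" and [measurable]: "A \<in> sets borel" "B \<in> sets borel"
      by auto
    then show "emeasure (distr M1 ?P (\<lambda>\<omega>. (X1 \<omega>, Y1 \<omega>))) E =
        emeasure (distr M2 ?P (\<lambda>\<omega>. (X2 \<omega>, Y2 \<omega>))) E"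
      by (simp add: M1.emeasure_distr_pair_Times M2.emeasure_distr_pair_Times rectangle_eq)
  qed
qed

text \<open>Reweighting by \<open>1 + cos (s X)\<close> and \<open>1 + sin (s X)\<close> and applying
  the one-dimensional theorem to \<open>Y\<close> identifies the integrals of \<open>indicator B (Y)\<close> against
  \<open>cos (s X)\<close> and \<open>sin (s X)\<close>; reweighting by \<open>indicator B (Y)\<close> then identifies the measures of
  rectangles.\<close>

lemma distr_pair_eq_if_cos_sin_integrals_eq:
  fixes X1 Y1 :: "'a \<Rightarrow> real" and X2 Y2 :: "'b \<Rightarrow> real"
  assumes P1: "prob_space M1" and P2: "prob_space M2"
    and meas1[measurable]: "X1 \<in> borel_measurable M1" "Y1 \<in> borel_measurable M1"
    and meas2[measurable]: "X2 \<in> borel_measurable M2" "Y2 \<in> borel_measurable M2"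
    and cos_eq: "\<And>s t. (\<integral>\<omega>. cos (s * X1 \<omega> + t * Y1 \<omega>) \<partial>M1) = (\<integral>\<omega>. cos (s * X2 \<omega> + t * Y2 \<omega>) \<partial>M2)"
    and sin_eq: "\<And>s t. (\<integral>\<omega>. sin (s * X1 \<omega> + t * Y1 \<omega>) \<partial>M1) = (\<integral>\<omega>. sin (s * X2 \<omega> + t * Y2 \<omega>) \<partial>M2)"
  shows "distr M1 (borel \<Otimes>\<^sub>M borel) (\<lambda>\<omega>. (X1 \<omega>, Y1 \<omega>)) =
      distr M2 (borel \<Otimes>\<^sub>M borel) (\<lambda>\<omega>. (X2 \<omega>, Y2 \<omega>))"
proof -
  interpret M1: prob_space M1 by fact
  interpret M2: prob_space M2 by fact
  have weight_bounds: "0 \<le> 1 + cos x" "1 + cos x \<le> 2" "0 \<le> 1 + sin x" "1 + sin x \<le> 2" for x :: real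
    using sin_ge_minus_one[of x] sin_le_one[of x] cos_ge_minus_one[of x] cos_le_one[of x] by linarith+
  have cos_weight: "(\<integral>\<omega>. (1 + cos (s * X1 \<omega>)) * indicator B (Y1 \<omega>) \<partial>M1) =
      (\<integral>\<omega>. (1 + cos (s * X2 \<omega>)) * indicator B (Y2 \<omega>) \<partial>M2)"
    if [measurable]: "B \<in> sets borel" for s B
    by (rule weighted_laws_eq[OF P1 P2, where K=2])
       (simp_all only: M1.weighted_trig_integrals[OF meas1] M2.weighted_trig_integrals[OF meas2] cos_eq sin_eq,
        auto simp: weight_bounds)
  have sin_weight: "(\<integral>\<omega>. (1 + sin (s * X1 \<omega>)) * indicator B (Y1 \<omega>) \<partial>M1) =
      (\<integral>\<omega>. (1 + sin (s * X2 \<omega>)) * indicator B (Y2 \<omega>) \<partial>M2)"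
    if [measurable]: "B \<in> sets borel" for s B
    by (rule weighted_laws_eq[OF P1 P2, where K=2])
       (simp_all only: M1.weighted_trig_integrals[OF meas1] M2.weighted_trig_integrals[OF meas2] cos_eq sin_eq,
        auto simp: weight_bounds)
  have indicator_eq: "(\<integral>\<omega>. indicator B (Y1 \<omega>) \<partial>M1) = (\<integral>\<omega>. (indicator B (Y2 \<omega>) :: real) \<partial>M2)"
    if "B \<in> sets borel" for B
    using cos_weight[OF that, of 0] by simp
  have cos_indicator_eq: "(\<integral>\<omega>. indicator B (Y1 \<omega>) * cos (t * X1 \<omega>) \<partial>M1) =
      (\<integral>\<omega>. indicator B (Y2 \<omega>) * cos (t * X2 \<omega>) \<partial>M2)"
    and sin_indicator_eq: "(\<integral>\<omega>. indicator B (Y1 \<omega>) * sin (t * X1 \<omega>) \<partial>M1) =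
      (\<integral>\<omega>. indicator B (Y2 \<omega>) * sin (t * X2 \<omega>) \<partial>M2)"
    if [measurable]: "B \<in> sets borel" for B t
    using cos_weight[OF that, of t] sin_weight[OF that, of t] indicator_eq[OF that]
      M1.integral_one_plus_mult_indicator[OF meas1 that, of "\<lambda>x. cos (t * x)"]
      M2.integral_one_plus_mult_indicator[OF meas2 that, of "\<lambda>x. cos (t * x)"]
      M1.integral_one_plus_mult_indicator[OF meas1 that, of "\<lambda>x. sin (t * x)"]
      M2.integral_one_plus_mult_indicator[OF meas2 that, of "\<lambda>x. sin (t * x)"]
    by simp_all
  show ?thesis
  proof (rule distr_pair_eq_if_rectangle_integrals_eq[OF P1 P2 meas1 meas2])
    fix A B :: "real set"
    assume [measurable]: "A \<in> sets borel" "B \<in> sets borel"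
    show "(\<integral>\<omega>. indicator B (Y1 \<omega>) * indicator A (X1 \<omega>) \<partial>M1) =
        (\<integral>\<omega>. (indicator B (Y2 \<omega>) * indicator A (X2 \<omega>) :: real) \<partial>M2)"
      by (rule weighted_laws_eq[OF P1 P2, where K=1])
         (auto simp: cos_indicator_eq sin_indicator_eq split: split_indicator)
  qed
qed

section \<open>Gaussian pairs\<close>

lemma prob_space_std_normal: "prob_space std_normal_distribution"
  using real_dist_normal_dist by (simp add: real_distribution_def)

lemma
  shows integral_cos_std_normal: "(\<integral>x. cos (c * x) \<partial>std_normal_distribution) = exp (- c\<^sup>2 / 2)"
    and integral_sin_std_normal: "(\<integral>x. sin (c * x) \<partial>std_normal_distribution) = 0"
proof -
  interpret prob_space std_normal_distribution
    by (rule prob_space_std_normal)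
  have "char std_normal_distribution c = (\<integral>x. (1::real) *\<^sub>R iexp (c * x) \<partial>std_normal_distribution)"
    by (simp add: char_def)
  also have "\<dots> = complex_of_real (\<integral>x. 1 * cos (c * x) \<partial>std_normal_distribution)
      + \<i> * complex_of_real (\<integral>x. 1 * sin (c * x) \<partial>std_normal_distribution)"
    by (rule integral_scaleR_iexp[where K=1]) auto
  finally have "complex_of_real (exp (- c\<^sup>2 / 2)) =
      complex_of_real (\<integral>x. cos (c * x) \<partial>std_normal_distribution)
      + \<i> * complex_of_real (\<integral>x. sin (c * x) \<partial>std_normal_distribution)"
    by (simp add: char_std_normal_distribution)
  then show "(\<integral>x. cos (c * x) \<partial>std_normal_distribution) = exp (- c\<^sup>2 / 2)"
    and "(\<integral>x. sin (c * x) \<partial>std_normal_distribution) = 0"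
    by (simp_all add: complex_eq_iff)
qed

lemma (in prob_space) real_normal_rvE:
  assumes "real_normal_rv M W"
  obtains \<mu> where "AE \<omega> in M. W \<omega> = \<mu>"
    | \<mu> \<sigma> where "\<sigma> > 0" "distributed M lborel W (\<lambda>x. ennreal (normal_density \<mu> \<sigma> x))"
proof -
  obtain \<mu> \<sigma> where "\<sigma> \<ge> 0" and "if \<sigma> = 0 then (AE \<omega> in M. W \<omega> = \<mu>)
      else distributed M lborel W (\<lambda>x. ennreal (normal_density \<mu> \<sigma> x))"
    using assms unfolding real_normal_rv_def by blast
  then show thesis
    using that(1) that(2)[of \<sigma> \<mu>] by (cases "\<sigma> = 0") auto
qed

lemma (in prob_space) integral_AE_eq_const:
  fixes V :: "'a \<Rightarrow> real"
  assumes "V \<in> borel_measurable M" and "AE \<omega> in M. V \<omega> = c"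
  shows "(\<integral>\<omega>. V \<omega> \<partial>M) = c"
proof -
  have "(\<integral>\<omega>. V \<omega> \<partial>M) = (\<integral>\<omega>. c \<partial>M)"
    by (rule integral_cong_AE) (use assms in simp_all)
  then show ?thesis
    by (simp add: prob_space)
qed

lemma (in prob_space) integrable_real_normal_rv:
  assumes "real_normal_rv M W"
  shows "integrable M W" and "integrable M (\<lambda>\<omega>. (W \<omega>)\<^sup>2)"
proof -
  have [measurable]: "W \<in> borel_measurable M"
    using assms by (simp add: real_normal_rv_def)
  have "integrable M W \<and> integrable M (\<lambda>\<omega>. (W \<omega>)\<^sup>2)"
    using assms
  proof (cases rule: real_normal_rvE)
    case (1 \<mu>)
    have "AE \<omega> in M. \<mu> = W \<omega>" "AE \<omega> in M. \<mu>\<^sup>2 = (W \<omega>)\<^sup>2"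
      using 1 by (eventually_elim, simp)+
    then show ?thesis
      using integrable_cong_AE_imp[of M "\<lambda>_. \<mu>" W] integrable_cong_AE_imp[of M "\<lambda>_. \<mu>\<^sup>2" "\<lambda>\<omega>. (W \<omega>)\<^sup>2"]
      by simp
  next
    case (2 \<mu> \<sigma>)
    have "integrable M W"
      using distributed_integrable[OF 2(2), of "\<lambda>x. x"] integrable_normal_moment_nz_1[of \<sigma> \<mu>] 2(1)
      by simp
    moreover have "integrable M (\<lambda>\<omega>. (W \<omega> - \<mu>)\<^sup>2)"
      using distributed_integrable[OF 2(2), of "\<lambda>x. (x -
          \<mu>)\<^sup>2"] integrable_normal_moment[of \<sigma> \<mu> 2] 2(1)
      by simp
    ultimately have "integrable M (\<lambda>\<omega>. (W \<omega> - \<mu>)\<^sup>2 + 2 * \<mu> * W \<omega> - \<mu>\<^sup>2)"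
      by (intro Bochner_Integration.integrable_diff Bochner_Integration.integrable_add
          integrable_mult_right)
         simp_all
    also have "(\<lambda>\<omega>. (W \<omega> - \<mu>)\<^sup>2 + 2 * \<mu> * W \<omega> - \<mu>\<^sup>2) = (\<lambda>\<omega>. (W \<omega>)\<^sup>2)"
      by (simp add: power2_eq_square algebra_simps)
    finally show ?thesis
      using \<open>integrable M W\<close> by simp
  qed
  then show "integrable M W" and "integrable M (\<lambda>\<omega>. (W \<omega>)\<^sup>2)"
    by auto
qed

lemma (in prob_space) real_normal_rv_cos_sin:
  assumes "real_normal_rv M W" and centered: "(\<integral>\<omega>. W \<omega> \<partial>M) = 0"
  shows "(\<integral>\<omega>. cos (W \<omega>) \<partial>M) = exp (- (\<integral>\<omega>. (W \<omega>)\<^sup>2 \<partial>M) / 2)"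
    and "(\<integral>\<omega>. sin (W \<omega>) \<partial>M) = 0"
proof -
  have [measurable]: "W \<in> borel_measurable M"
    using assms by (simp add: real_normal_rv_def)
  have "(\<integral>\<omega>. cos (W \<omega>) \<partial>M) = exp (- (\<integral>\<omega>. (W \<omega>)\<^sup>2 \<partial>M) / 2) \<and> (\<integral>\<omega>. sin (W \<omega>) \<partial>M) = 0"
    using assms(1)
  proof (cases rule: real_normal_rvE)
    case (1 \<mu>)
    have "AE \<omega> in M. W \<omega> = 0"
      using 1 integral_AE_eq_const[OF _ 1] centered by simp
    then have "AE \<omega> in M. cos (W \<omega>) = 1" "AE \<omega> in M. sin (W \<omega>) = 0" "AE \<omega> in M. (W \<omega>)\<^sup>2 = 0"
      by (eventually_elim, simp)+
    then show ?thesis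
      by (simp add: integral_AE_eq_const)
  next
    case (2 \<mu> \<sigma>)
    have "\<mu> = 0"
      using normal_distributed_expectation[OF 2] centered by simp
    have var: "(\<integral>\<omega>. (W \<omega>)\<^sup>2 \<partial>M) = \<sigma>\<^sup>2"
      using normal_distributed_variance[OF 2] centered \<open>\<mu> = 0\<close> by simp
    have "distributed M lborel (\<lambda>\<omega>. (W \<omega> - \<mu>) / \<sigma>) (\<lambda>x. ennreal (std_normal_density x))"
      using normal_standard_normal_convert[OF 2(1), of W \<mu>] 2(2) by simp
    then have std: "distr M lborel (\<lambda>\<omega>. W \<omega> / \<sigma>) = std_normal_distribution"
      by (simp add: distributed_def \<open>\<mu> = 0\<close>)
    have "(\<integral>x. f (\<sigma> * x) \<partial>std_normal_distribution) = (\<integral>\<omega>. f (W \<omega>) \<partial>M)"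
      if [measurable]: "f \<in> borel_measurable borel" for f :: "real \<Rightarrow> real"
      unfolding std[symmetric] using 2(1) by (subst integral_distr) auto
    from this[of cos] this[of sin] show ?thesis
      using var by (simp add: integral_cos_std_normal integral_sin_std_normal)
  qed
  then show "(\<integral>\<omega>. cos (W \<omega>) \<partial>M) = exp (- (\<integral>\<omega>. (W \<omega>)\<^sup>2 \<partial>M) / 2)"
    and "(\<integral>\<omega>. sin (W \<omega>) \<partial>M) = 0"
    by auto
qed

abbreviation std_normal_pair :: "(real \<times> real) measure" where
  "std_normal_pair \<equiv> std_normal_distribution \<Otimes>\<^sub>M std_normal_distribution"

lemma pair_prob_space_std_normal: "pair_prob_space std_normal_distribution std_normal_distribution"
  by (simp add: pair_prob_space_def pair_sigma_finite_def prob_space_std_normal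
      prob_space_imp_sigma_finite)

lemma prob_space_std_normal_pair: "prob_space std_normal_pair"
proof -
  interpret pair_prob_space std_normal_distribution std_normal_distribution
    by (rule pair_prob_space_std_normal)
  show ?thesis
    by (rule P.prob_space_axioms)
qed

lemma integral_std_normal_pair_mult:
  fixes f g :: "real \<Rightarrow> real"
  assumes [measurable]: "f \<in> borel_measurable borel" "g \<in> borel_measurable borel"
    and bound: "\<And>x. \<bar>f x\<bar> \<le> 1" "\<And>x. \<bar>g x\<bar> \<le> 1"
  shows "(\<integral>z. f (fst z) * g (snd z) \<partial>std_normal_pair) =
    (\<integral>x. f x \<partial>std_normal_distribution) * (\<integral>x. g x \<partial>std_normal_distribution)"
proof -
  interpret pair_prob_space std_normal_distribution std_normal_distribution
    by (rule pair_prob_space_std_normal)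
  have "integrable std_normal_pair (\<lambda>(u, v). f u * g v)"
    by (rule P.integrable_bounded[where K=1]) (auto simp: abs_mult intro!: mult_le_one bound)
  then have "(\<integral>u. (\<integral>v. f u * g v \<partial>std_normal_distribution) \<partial>std_normal_distribution) =
      (\<integral>z. (\<lambda>(u, v). f u * g v) z \<partial>std_normal_pair)"
    by (rule integral_fst)
  then show ?thesis
    by (simp add: case_prod_beta')
qed

lemma
  shows integral_cos_std_normal_pair:
      "(\<integral>z. cos (\<alpha> * fst z + \<beta> * snd z) \<partial>std_normal_pair) = exp (- (\<alpha>\<^sup>2 + \<beta>\<^sup>2) / 2)"
    and integral_sin_std_normal_pair:
      "(\<integral>z. sin (\<alpha> * fst z + \<beta> * snd z) \<partial>std_normal_pair) = 0"
proof -
  interpret prob_space std_normal_pair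
    by (rule prob_space_std_normal_pair)
  have [simp]: "integrable std_normal_pair (\<lambda>z. f (\<alpha> * fst z) * g (\<beta> * snd z))"
    if "f = cos \<or> f = sin" "g = cos \<or> g = sin" for f g
    by (rule integrable_bounded[where K=1]) (use that in \<open>auto simp: abs_mult intro: mult_le_one\<close>)
  note product = integral_std_normal_pair_mult[of "\<lambda>x. f (\<alpha> * x)" "\<lambda>x. g (\<beta> * x)" for f g]
  show "(\<integral>z. cos (\<alpha> * fst z + \<beta> * snd z) \<partial>std_normal_pair) = exp (- (\<alpha>\<^sup>2 + \<beta>\<^sup>2) / 2)"
    using product[of cos cos] product[of sin sin]
    by (simp add: cos_add integral_cos_std_normal integral_sin_std_normal)
       (simp add: mult_exp_exp field_simps)
  show "(\<integral>z. sin (\<alpha> * fst z + \<beta> * snd z) \<partial>std_normal_pair) = 0"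
    using product[of sin cos] product[of cos sin]
    by (simp add: sin_add integral_cos_std_normal integral_sin_std_normal)
qed

locale standard_gaussian_pair = prob_space M for M :: "'a measure" +
  fixes X Y :: "'a \<Rightarrow> real" and \<rho> :: real
  assumes normal_lincomb: "\<And>s t. real_normal_rv M (\<lambda>\<omega>. s * X \<omega> + t * Y \<omega>)"
    and centered: "(\<integral>\<omega>. X \<omega> \<partial>M) = 0" "(\<integral>\<omega>. Y \<omega> \<partial>M) = 0"
    and unit_variance: "(\<integral>\<omega>. X \<omega> * X \<omega> \<partial>M) = 1" "(\<integral>\<omega>. Y \<omega> * Y \<omega> \<partial>M) = 1"
    and correlation: "(\<integral>\<omega>. X \<omega> * Y \<omega> \<partial>M) = \<rho>"

definition correlating_map :: "real \<Rightarrow> real \<times> real \<Rightarrow> real \<times> real" where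
  "correlating_map \<rho> z =
    (sqrt ((1 + \<rho>) / 2) * fst z + sqrt ((1 - \<rho>) / 2) * snd z,
     sqrt ((1 + \<rho>) / 2) * fst z - sqrt ((1 - \<rho>) / 2) * snd z)"

lemma measurable_correlating_map_std_normal_pair [measurable]:
  "correlating_map \<rho> \<in> measurable std_normal_pair (borel \<Otimes>\<^sub>M borel)"
  unfolding correlating_map_def by measurable

context standard_gaussian_pair
begin

lemma swap: "standard_gaussian_pair M Y X \<rho>"
proof
  show "real_normal_rv M (\<lambda>\<omega>. s * Y \<omega> + t * X \<omega>)" for s t
    using normal_lincomb[of t s] by (simp add: add.commute)
  show "(\<integral>\<omega>. Y \<omega> * X \<omega> \<partial>M) = \<rho>"
    using correlation by (simp add: mult.commute)
qed (use centered unit_variance in auto)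

lemma measurable_pair [measurable]: "X \<in> borel_measurable M" "Y \<in> borel_measurable M"
  using normal_lincomb[of 1 0] normal_lincomb[of 0 1] by (simp_all add: real_normal_rv_def)

lemma integrable_moments:
  shows "integrable M X" "integrable M Y"
    and "integrable M (\<lambda>\<omega>. X \<omega> * X \<omega>)" "integrable M (\<lambda>\<omega>. Y \<omega> * Y \<omega>)"
    and "integrable M (\<lambda>\<omega>. X \<omega> * Y \<omega>)"
proof -
  note normal = normal_lincomb[of 1 0] normal_lincomb[of 0 1] normal_lincomb[of 1 1]
  show "integrable M X" "integrable M Y" "integrable M (\<lambda>\<omega>. X \<omega> * X \<omega>)"
      "integrable M (\<lambda>\<omega>. Y \<omega> * Y \<omega>)"
    using normal[THEN integrable_real_normal_rv(1)] normal[THEN integrable_real_normal_rv(2)]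
    by (simp_all add: power2_eq_square)
  have "integrable M (\<lambda>\<omega>. ((X \<omega> + Y \<omega>)\<^sup>2 - (X \<omega>)\<^sup>2 - (Y \<omega>)\<^sup>2) / 2)"
    using normal[THEN integrable_real_normal_rv(2)] by (intro integrable_divide integrable_diff)
        simp_all
  also have "(\<lambda>\<omega>. ((X \<omega> + Y \<omega>)\<^sup>2 - (X \<omega>)\<^sup>2 - (Y \<omega>)\<^sup>2) / 2) = (\<lambda>\<omega>. X \<omega> * Y \<omega>)"
    by (simp add: power2_eq_square algebra_simps)
  finally show "integrable M (\<lambda>\<omega>. X \<omega> * Y \<omega>)" .
qed

lemma second_moment_lincomb: "(\<integral>\<omega>. (s * X \<omega> + t * Y \<omega>)\<^sup>2 \<partial>M) = s\<^sup>2 + 2 * s * t * \<rho> + t\<^sup>2"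
proof -
  have "(\<lambda>\<omega>. (s * X \<omega> + t * Y \<omega>)\<^sup>2) =
      (\<lambda>\<omega>. s\<^sup>2 * (X \<omega> * X \<omega>) + (2 * s * t) * (X \<omega> * Y \<omega>) + t\<^sup>2 * (Y \<omega> * Y \<omega>))"
    by (simp add: fun_eq_iff power2_eq_square algebra_simps)
  then show ?thesis
    using integrable_moments unit_variance correlation by simp
qed

lemma correlation_bounds: "-1 \<le> \<rho>" "\<rho> \<le> 1"
proof -
  have "0 \<le> (\<integral>\<omega>. (1 * X \<omega> + 1 * Y \<omega>)\<^sup>2 \<partial>M)" "0 \<le> (\<integral>\<omega>. (1 * X \<omega> + (-1) * Y \<omega>)\<^sup>2 \<partial>M)"
    by simp_all
  then show "-1 \<le> \<rho>" "\<rho> \<le> 1"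
    unfolding second_moment_lincomb by simp_all
qed

lemma distr_eq_correlating_map:
  "distr M (borel \<Otimes>\<^sub>M borel) (\<lambda>\<omega>. (X \<omega>, Y \<omega>)) =
      distr std_normal_pair (borel \<Otimes>\<^sub>M borel) (correlating_map \<rho>)"
proof -
  define a b where "a = sqrt ((1 + \<rho>) / 2)" and "b = sqrt ((1 - \<rho>) / 2)"
  have ab: "a\<^sup>2 = (1 + \<rho>) / 2" "b\<^sup>2 = (1 - \<rho>) / 2"
    using correlation_bounds by (simp_all add: a_def b_def)
  have mean: "(\<integral>\<omega>. s * X \<omega> + t * Y \<omega> \<partial>M) = 0" for s t
    using integrable_moments centered by simp
  have lincomb: "s * fst (correlating_map \<rho> z) + t * snd (correlating_map \<rho> z) =
      ((s + t) * a) * fst z + ((s - t) * b) * snd z" for s t z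
    by (simp add: correlating_map_def a_def b_def algebra_simps)
  have variance: "((s + t) * a)\<^sup>2 + ((s - t) * b)\<^sup>2 = s\<^sup>2 + 2 * s * t * \<rho> + t\<^sup>2" for s t
    by (simp add: power_mult_distrib ab) (simp add: power2_eq_square field_simps)
  have "(\<integral>\<omega>. cos (s * X \<omega> + t * Y \<omega>) \<partial>M) =
      (\<integral>z. cos (s * fst (correlating_map \<rho> z) + t * snd (correlating_map \<rho> z)) \<partial>std_normal_pair)"
    for s t
    unfolding real_normal_rv_cos_sin(1)[OF normal_lincomb mean] second_moment_lincomb lincomb
      integral_cos_std_normal_pair variance ..
  moreover have "(\<integral>\<omega>. sin (s * X \<omega> + t * Y \<omega>) \<partial>M) =
      (\<integral>z. sin (s * fst (correlating_map \<rho> z) + t * snd (correlating_map \<rho> z)) \<partial>std_normal_pair)"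
    for s t
    unfolding real_normal_rv_cos_sin(2)[OF normal_lincomb mean] lincomb
        integral_sin_std_normal_pair ..
  ultimately show ?thesis
    using distr_pair_eq_if_cos_sin_integrals_eq[OF prob_space_axioms prob_space_std_normal_pair,
        of X Y "\<lambda>z. fst (correlating_map \<rho> z)" "\<lambda>z. snd (correlating_map \<rho> z)"]
    by simp
qed

end

section \<open>One-dimensional Gaussian integrals\<close>

abbreviation \<phi> :: "real \<Rightarrow> real" where
  "\<phi> \<equiv> std_normal_density"

lemma std_normal_density_eq: "\<phi> x = exp (- x\<^sup>2 / 2) / sqrt (2 * pi)"
  by (simp add: std_normal_density_def)

lemma std_normal_density_minus: "\<phi> (- x) = \<phi> x" by (simp add: std_normal_density_eq)

lemma std_normal_density_antimono: "0 \<le> v \<Longrightarrow> v \<le> L \<Longrightarrow> \<phi> L \<le> \<phi> v"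
  by (simp add: std_normal_density_eq divide_right_mono power_mono)

lemma std_normal_density_mult: "\<phi> a * \<phi> b = exp (- (a\<^sup>2 + b\<^sup>2) / 2) / (2 * pi)"
  by (simp add: std_normal_density_eq mult_exp_exp field_simps real_sqrt_mult[symmetric]) 

lemma std_normal_density_mult_scaled: "\<phi> v * \<phi> (c * v) =
    (1 / (2 * pi)) * exp (- ((1 + c\<^sup>2) / 2 * v\<^sup>2))"
  by (simp add: std_normal_density_mult power_mult_distrib field_simps)

lemma has_real_derivative_minus_std_normal_density: "DERIV (\<lambda>x. - \<phi> x) x :> \<phi> x * x"
proof -
  have "DERIV (\<lambda>x. - (exp (- x\<^sup>2 / 2) / sqrt (2 * pi))) x :> exp (- x\<^sup>2 / 2) / sqrt (2 * pi) * x"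
    by (auto intro!: derivative_eq_intros simp: field_simps power2_eq_square)
  then show ?thesis by (simp add: std_normal_density_eq)
qed

lemma tendsto_exp_neg_square:
  assumes "\<beta> > 0"
  shows "((\<lambda>x::real. exp (- (\<beta> * x\<^sup>2))) \<longlongrightarrow> 0) at_top"
proof -
  have "filterlim (\<lambda>x::real. \<beta> * x\<^sup>2) at_top at_top"
    by (rule filterlim_tendsto_pos_mult_at_top[OF tendsto_const assms])
       (auto intro: filterlim_pow_at_top filterlim_ident)
  then have "filterlim (\<lambda>x::real. - (\<beta> * x\<^sup>2)) at_bot at_top"
    by (simp add: filterlim_uminus_at_top)
  then show ?thesis by (rule filterlim_compose[OF exp_at_bot])
qed

lemma tendsto_minus_std_normal_density: "((\<lambda>x. - \<phi> x) \<longlongrightarrow> 0) at_top"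
proof -
  have "((\<lambda>x. - (exp (- ((1/2) * x\<^sup>2)) / sqrt (2 * pi))) \<longlongrightarrow> - (0 / sqrt (2 * pi))) at_top"
    by (intro tendsto_minus tendsto_divide tendsto_exp_neg_square tendsto_const) auto
  then show ?thesis by (simp add: std_normal_density_eq)
qed

lemma nn_integral_exp_neg_square:
  assumes b: "\<beta> > 0"
  shows "(\<integral>\<^sup>+v. ennreal (exp (- (\<beta> * v\<^sup>2))) * indicator {0..} v \<partial>lborel) =
      ennreal (sqrt pi / (2 * sqrt \<beta>))"
proof -
  have hb: "has_bochner_integral lborel (\<lambda>x. indicator {0..} x *\<^sub>R exp (- x\<^sup>2)) (sqrt pi / 2)"
    by (rule gaussian_moment_0)
  have "(\<integral>\<^sup>+x. ennreal (indicator {0..} x *\<^sub>R exp (- x\<^sup>2)) \<partial>lborel) = ennreal (sqrt pi / 2)"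
    using hb by (subst nn_integral_eq_integral) (auto simp: has_bochner_integral_iff)
  then have I: "(\<integral>\<^sup>+x. ennreal (exp (- x\<^sup>2)) * indicator {0..} x \<partial>lborel) = ennreal (sqrt pi / 2)"
    by (simp add: indicator_mult_ennreal mult.commute)
  have sb: "sqrt \<beta> > 0" using b by simp
  have "(\<integral>\<^sup>+x. ennreal (exp (- x\<^sup>2)) * indicator {0..} x \<partial>lborel) =
      ennreal \<bar>sqrt \<beta>\<bar> * (\<integral>\<^sup>+v. ennreal (exp (- (0 + sqrt \<beta> * v)\<^sup>2)) * indicator {0..} (0 +
          sqrt \<beta> * v) \<partial>lborel)"
    by (rule nn_integral_real_affine) (use sb in auto)
  also have "(\<integral>\<^sup>+v. ennreal (exp (- (0 + sqrt \<beta> * v)\<^sup>2)) * indicator {0..} (0 +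
      sqrt \<beta> * v) \<partial>lborel) =
      (\<integral>\<^sup>+v. ennreal (exp (- (\<beta> * v\<^sup>2))) * indicator {0..} v \<partial>lborel)"
    using b sb by (intro nn_integral_cong) (auto simp: power_mult_distrib zero_le_mult_iff split:
        split_indicator)
  finally have "ennreal (sqrt \<beta>) * (\<integral>\<^sup>+v. ennreal (exp (-
      (\<beta> * v\<^sup>2))) * indicator {0..} v \<partial>lborel) = ennreal (sqrt pi / 2)"
    using I sb by simp
  then have "ennreal (1 / sqrt \<beta>) * (ennreal (sqrt \<beta>) * (\<integral>\<^sup>+v. ennreal (exp (-
      (\<beta> * v\<^sup>2))) * indicator {0..} v \<partial>lborel)) = ennreal (1 / sqrt \<beta>) * ennreal (sqrt pi / 2)"
    by simp
  moreover have "ennreal (1 / sqrt \<beta>) * ennreal (sqrt \<beta>) = 1"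
    using sb by (simp add: ennreal_mult[symmetric])
  moreover have "ennreal (1 / sqrt \<beta>) * ennreal (sqrt pi / 2) = ennreal (sqrt pi / (2 * sqrt \<beta>))"
    using sb by (simp add: ennreal_mult[symmetric])
  ultimately show ?thesis
    by (simp only: mult.assoc[symmetric] mult_1)
qed

lemma nn_integral_mult_exp_neg_square:
  assumes b: "\<beta> > 0"
  shows "(\<integral>\<^sup>+v. ennreal (v * exp (- (\<beta> * v\<^sup>2))) * indicator {0..} v \<partial>lborel) =
      ennreal (1 / (2 * \<beta>))"
proof -
  have "(\<integral>\<^sup>+v. ennreal (v * exp (- (\<beta> * v\<^sup>2))) * indicator {0..} v \<partial>lborel) =
      ennreal (0 - (- exp (- (\<beta> * 0\<^sup>2)) / (2 * \<beta>)))"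
  proof (rule nn_integral_FTC_atLeast)
    show "((\<lambda>x. - exp (- (\<beta> * x\<^sup>2)) / (2 * \<beta>)) \<longlongrightarrow> 0) at_top"
      using tendsto_divide[OF tendsto_minus[OF tendsto_exp_neg_square[OF b]] tendsto_const[of "2 *
          \<beta>"]] b by simp
    show "DERIV (\<lambda>x. - exp (- (\<beta> * x\<^sup>2)) / (2 * \<beta>)) x :> x * exp (- (\<beta> * x\<^sup>2))" for x
      using b by (auto intro!: derivative_eq_intros simp: field_simps power2_eq_square)
  qed (auto intro: mult_nonneg_nonneg)
  then show ?thesis by simp
qed

lemma borel_measurable_indicator_atLeast [measurable]:
  fixes f g :: "'a \<Rightarrow> real"
  assumes [measurable]: "f \<in> borel_measurable M" "g \<in> borel_measurable M"
  shows "(\<lambda>x. indicator {f x..} (g x) :: ennreal) \<in> borel_measurable M"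
  unfolding indicator_def atLeast_iff by measurable

lemma borel_measurable_lborel_pair:
  "f \<in> borel_measurable (borel \<Otimes>\<^sub>M borel) \<Longrightarrow> f \<in> borel_measurable (lborel \<Otimes>\<^sub>M lborel)"
  by (simp add: measurable_cong_sets[OF sets_pair_measure_cong[OF sets_lborel sets_lborel] refl])

lemma nn_integral_lborel_swap:
  fixes f :: "real \<Rightarrow> real \<Rightarrow> ennreal"
  assumes "(\<lambda>p. f (fst p) (snd p)) \<in> borel_measurable (borel \<Otimes>\<^sub>M borel)"
  shows "(\<integral>\<^sup>+x. \<integral>\<^sup>+y. f x y \<partial>lborel \<partial>lborel) = (\<integral>\<^sup>+y. \<integral>\<^sup>+x. f x y \<partial>lborel \<partial>lborel)"
proof -
  have "(\<lambda>(x, y). f x y) \<in> borel_measurable (lborel \<Otimes>\<^sub>M lborel)"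
    using borel_measurable_lborel_pair[OF assms] by (simp add: split_beta')
  from lborel_pair.Fubini'[OF this] show ?thesis
    by simp
qed

lemma nn_integral_lborel_even:
  fixes g :: "real \<Rightarrow> ennreal"
  assumes [measurable]: "g \<in> borel_measurable borel" and ev: "\<And>v. g (- v) = g v"
  shows "(\<integral>\<^sup>+v. g v \<partial>lborel) = 2 * (\<integral>\<^sup>+v. g v * indicator {0..} v \<partial>lborel)"
proof -
  have "(\<integral>\<^sup>+v. g v \<partial>lborel) = (\<integral>\<^sup>+v. g v * indicator {0..} v + g v * indicator {..<0} v \<partial>lborel)"
    by (intro nn_integral_cong) (auto split: split_indicator)
  also have "\<dots> = (\<integral>\<^sup>+v. g v * indicator {0..} v \<partial>lborel) + (\<integral>\<^sup>+v. g v * indicator {..<0} v \<partial>lborel)"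
    by (rule nn_integral_add) auto
  also have "(\<integral>\<^sup>+v. g v * indicator {..<0} v \<partial>lborel) =
      ennreal \<bar>-1\<bar> * (\<integral>\<^sup>+v. g (0 + -1 * v) * indicator {..<0} (0 + -1 * v) \<partial>lborel)"
    by (rule nn_integral_real_affine) auto
  also have "\<dots> = (\<integral>\<^sup>+v. g v * indicator {0..} v \<partial>lborel)"
    by (simp, intro nn_integral_cong_AE, use AE_lborel_singleton[of 0] in eventually_elim)
       (auto simp: ev split: split_indicator)
  finally show ?thesis by (simp add: mult_2)
qed

lemma nn_integral_std_normal_first_moment_tail:
  assumes m: "m \<ge> 0"
  shows "(\<integral>\<^sup>+u. ennreal (\<phi> u * u) * indicator {m..} u \<partial>lborel) = ennreal (\<phi> m)"
proof -
  have "(\<integral>\<^sup>+u. ennreal (\<phi> u * u) * indicator {m..} u \<partial>lborel) = ennreal (0 - (- \<phi> m))"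
    by (rule nn_integral_FTC_atLeast[OF _ has_real_derivative_minus_std_normal_density _
        tendsto_minus_std_normal_density]) (use m in auto)
  then show ?thesis by simp
qed

lemma nn_integral_std_normal_second_moment_tail:
  assumes m: "m \<ge> 0"
  shows "(\<integral>\<^sup>+u. ennreal (\<phi> u * u\<^sup>2) * indicator {m..} u \<partial>lborel) =
      ennreal (m * \<phi> m) + (\<integral>\<^sup>+u. ennreal (\<phi> u) * indicator {m..} u \<partial>lborel)"
proof -
  have "(\<integral>\<^sup>+u. ennreal (\<phi> u) * indicator {m..} u \<partial>lborel) =
      (\<integral>\<^sup>+u. (\<integral>\<^sup>+t. ennreal (\<phi> t * t) * indicator {u..} t \<partial>lborel) * indicator {m..} u \<partial>lborel)"
    using m by (intro nn_integral_cong) (auto simp: nn_integral_std_normal_first_moment_tail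
        split: split_indicator)
  also have "\<dots> = (\<integral>\<^sup>+u. \<integral>\<^sup>+t. ennreal (\<phi> t * t)
      * indicator {u..} t * indicator {m..} u \<partial>lborel \<partial>lborel)"
    by (intro nn_integral_cong) (simp add: nn_integral_multc)
  also have "\<dots> = (\<integral>\<^sup>+t. \<integral>\<^sup>+u. ennreal (\<phi> t * t)
      * indicator {u..} t * indicator {m..} u \<partial>lborel \<partial>lborel)"
    by (rule nn_integral_lborel_swap) measurable
  also have "\<dots> = (\<integral>\<^sup>+t. ennreal (\<phi> t * t * (t - m)) * indicator {m..} t \<partial>lborel)"
  proof (intro nn_integral_cong)
    fix t :: real
    have "(\<integral>\<^sup>+u. ennreal (\<phi> t * t) * indicator {u..} t * indicator {m..} u \<partial>lborel) =
        (\<integral>\<^sup>+u. ennreal (\<phi> t * t) * indicator {m..t} u \<partial>lborel)"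
      by (intro nn_integral_cong) (auto split: split_indicator)
    also have "\<dots> = ennreal (\<phi> t * t) * emeasure lborel {m..t}"
      by (rule nn_integral_cmult_indicator) simp
    also have "\<dots> = ennreal (\<phi> t * t * (t - m)) * indicator {m..} t"
      using m by (auto simp: ennreal_mult[symmetric] split: split_indicator)
    finally show "(\<integral>\<^sup>+u. ennreal (\<phi> t * t) * indicator {u..} t * indicator {m..} u \<partial>lborel) =
        ennreal (\<phi> t * t * (t - m)) * indicator {m..} t" .
  qed
  finally have A: "(\<integral>\<^sup>+u. ennreal (\<phi> u) * indicator {m..} u \<partial>lborel) =
      (\<integral>\<^sup>+t. ennreal (\<phi> t * t * (t - m)) * indicator {m..} t \<partial>lborel)" .
  have "(\<integral>\<^sup>+u. ennreal (\<phi> u * u\<^sup>2) * indicator {m..} u \<partial>lborel) =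
      (\<integral>\<^sup>+u. ennreal (\<phi> u * u * (u - m)) * indicator {m..} u +
          ennreal m * (ennreal (\<phi> u * u) * indicator {m..} u) \<partial>lborel)"
  proof (intro nn_integral_cong)
    fix u :: real
    show "ennreal (\<phi> u * u\<^sup>2) * indicator {m..} u =
        ennreal (\<phi> u * u * (u - m)) * indicator {m..} u +
            ennreal m * (ennreal (\<phi> u * u) * indicator {m..} u)"
    proof (cases "m \<le> u")
      case True
      have "ennreal (\<phi> u * u\<^sup>2) = ennreal (\<phi> u * u * (u - m)) + ennreal (m * (\<phi> u * u))"
        using True m by (subst ennreal_plus[symmetric])
            (auto simp: power2_eq_square algebra_simps intro!: mult_right_mono)
      then show ?thesis using True m by (simp add: ennreal_mult)
    qed simp
  qed
  also have "\<dots> = (\<integral>\<^sup>+u. ennreal (\<phi> u * u * (u - m)) * indicator {m..} u \<partial>lborel) +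
      ennreal m * (\<integral>\<^sup>+u. ennreal (\<phi> u * u) * indicator {m..} u \<partial>lborel)"
    by (simp add: nn_integral_add nn_integral_cmult)
  finally show ?thesis using m by (simp add: A nn_integral_std_normal_first_moment_tail
      ennreal_mult[symmetric] add.commute)
qed

lemma nn_integral_std_normal_second_moment_Icc:
  assumes L: "L \<ge> 0"
  shows "(\<integral>\<^sup>+v. ennreal (\<phi> v * v\<^sup>2) * indicator {0..L} v \<partial>lborel) + ennreal (L * \<phi> L) =
      (\<integral>\<^sup>+v. ennreal (\<phi> v) * indicator {0..L} v \<partial>lborel)"
proof -
  have F: "(\<integral>\<^sup>+t. ennreal (\<phi> t * t) * indicator {v..L} t \<partial>lborel) =
      ennreal (\<phi> v - \<phi> L)" if "0 \<le> v" "v \<le> L" for v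
  proof -
    have "(\<integral>\<^sup>+t. ennreal (\<phi> t * t) * indicator {v..L} t \<partial>lborel) = ennreal (- \<phi> L - (- \<phi> v))"
      by (rule nn_integral_FTC_Icc[OF _ has_real_derivative_minus_std_normal_density])
          (use that in auto)
    then show ?thesis by simp
  qed
  have Fub: "(\<integral>\<^sup>+v. \<integral>\<^sup>+t. ennreal (\<phi> t * t) * indicator {v..L} t *
      indicator {0..L} v \<partial>lborel \<partial>lborel) =
      (\<integral>\<^sup>+t. \<integral>\<^sup>+v. ennreal (\<phi> t * t) * indicator {v..L} t * indicator {0..L} v \<partial>lborel \<partial>lborel)"
    by (rule nn_integral_lborel_swap) (simp add: indicator_def, measurable)
  have iv: "(\<integral>\<^sup>+v. \<integral>\<^sup>+t. ennreal (\<phi> t * t) * indicator {v..L} t *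
      indicator {0..L} v \<partial>lborel \<partial>lborel) =
      (\<integral>\<^sup>+v. ennreal (\<phi> v - \<phi> L) * indicator {0..L} v \<partial>lborel)"
  proof (intro nn_integral_cong)
    fix v :: real
    show "(\<integral>\<^sup>+t. ennreal (\<phi> t * t) * indicator {v..L} t * indicator {0..L} v \<partial>lborel) =
        ennreal (\<phi> v - \<phi> L) * indicator {0..L} v"
    proof (cases "0 \<le> v \<and> v \<le> L")
      case True
      then show ?thesis by (simp add: F)
    qed (auto split: split_indicator)
  qed
  have it: "(\<integral>\<^sup>+t. \<integral>\<^sup>+v. ennreal (\<phi> t * t) * indicator {v..L} t *
      indicator {0..L} v \<partial>lborel \<partial>lborel) =
      (\<integral>\<^sup>+t. ennreal (\<phi> t * t\<^sup>2) * indicator {0..L} t \<partial>lborel)"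
  proof (intro nn_integral_cong)
    fix t :: real
    have "(\<integral>\<^sup>+v. ennreal (\<phi> t * t) * indicator {v..L} t * indicator {0..L} v \<partial>lborel) =
        (\<integral>\<^sup>+v. (ennreal (\<phi> t * t) * indicator {0..L} t) * indicator {0..t} v \<partial>lborel)"
      by (intro nn_integral_cong) (auto split: split_indicator)
    also have "\<dots> = (ennreal (\<phi> t * t) * indicator {0..L} t) * emeasure lborel {0..t}"
      by (rule nn_integral_cmult_indicator) simp
    also have "\<dots> = ennreal (\<phi> t * t\<^sup>2) * indicator {0..L} t"
      by (auto simp: ennreal_mult[symmetric] power2_eq_square mult.assoc split: split_indicator)
    finally show "(\<integral>\<^sup>+v. ennreal (\<phi> t * t) * indicator {v..L} t * indicator {0..L} v \<partial>lborel) =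
        ennreal (\<phi> t * t\<^sup>2) * indicator {0..L} t" .
  qed
  have sp: "(\<integral>\<^sup>+v. ennreal (\<phi> v) * indicator {0..L} v \<partial>lborel) =
      (\<integral>\<^sup>+v. ennreal (\<phi> v - \<phi> L) * indicator {0..L} v + ennreal (\<phi> L) * indicator {0..L} v \<partial>lborel)"
  proof (intro nn_integral_cong)
    fix v :: real
    show "ennreal (\<phi> v) * indicator {0..L} v =
        ennreal (\<phi> v - \<phi> L) * indicator {0..L} v + ennreal (\<phi> L) * indicator {0..L} v"
    proof (cases "0 \<le> v \<and> v \<le> L")
      case True
      then show ?thesis using std_normal_density_antimono[of v L] by (simp add:
          ennreal_plus[symmetric] del: ennreal_plus)
    qed auto
  qed
  also have "\<dots> = (\<integral>\<^sup>+v. ennreal (\<phi> v - \<phi> L) * indicator {0..L} v \<partial>lborel) +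
      ennreal (\<phi> L) * ennreal L"
    using L by (simp add: nn_integral_add nn_integral_cmult_indicator)
  finally show ?thesis using Fub iv it L by (simp add: ennreal_mult[symmetric] mult.commute)
qed

lemma nn_integral_std_normal_ray:
  "(\<integral>\<^sup>+v. ennreal (v * \<phi> (v * s) * \<phi> v) * indicator {0..} v \<partial>lborel) =
      ennreal (1 / (2 * pi * (1 + s\<^sup>2)))"
proof -
  have b: "(1 + s\<^sup>2) / 2 > 0" by (simp add: add_pos_nonneg)
  have "(\<integral>\<^sup>+v. ennreal (v * \<phi> (v * s) * \<phi> v) * indicator {0..} v \<partial>lborel) =
      (\<integral>\<^sup>+v. ennreal (1 / (2 * pi)) * (ennreal (v * exp (- ((1 +
          s\<^sup>2) / 2 * v\<^sup>2))) * indicator {0..} v) \<partial>lborel)"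
    by (intro nn_integral_cong) (auto simp: ennreal_mult[symmetric] mult.assoc
        std_normal_density_mult power_mult_distrib field_simps split: split_indicator)
  also have "\<dots> = ennreal (1 / (2 * pi)) * ennreal (1 / (2 * ((1 + s\<^sup>2) / 2)))"
    using nn_integral_mult_exp_neg_square[OF b] by (subst nn_integral_cmult) auto
  also have "\<dots> = ennreal (1 / (2 * pi * (1 + s\<^sup>2)))"
    by (simp add: ennreal_mult[symmetric])
  finally show ?thesis .
qed

lemma nn_integral_std_normal_wedge_half:
  assumes c: "c \<ge> 0"
  shows "(\<integral>\<^sup>+v. ennreal (\<phi> v) * indicator {0..} v * (\<integral>\<^sup>+u. ennreal (\<phi> u)
      * indicator {c * v..} u \<partial>lborel) \<partial>lborel)
    = ennreal (1/4 - arctan c / (2 * pi))"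
proof -
  have S1: "ennreal (\<phi> v) * (\<integral>\<^sup>+u. ennreal (\<phi> u) * indicator {c * v..} u \<partial>lborel) =
      (\<integral>\<^sup>+s. ennreal (v * \<phi> (v * s) * \<phi> v) * indicator {c..} s \<partial>lborel)" if v: "v > 0" for v
  proof -
    have "(\<integral>\<^sup>+u. ennreal (\<phi> u) * indicator {c * v..} u \<partial>lborel) =
        ennreal \<bar>v\<bar> * (\<integral>\<^sup>+s. ennreal (\<phi> (0 + v * s)) * indicator {c * v..} (0 + v * s) \<partial>lborel)"
      by (rule nn_integral_real_affine) (use v in auto)
    also have "(\<integral>\<^sup>+s. ennreal (\<phi> (0 + v * s)) * indicator {c * v..} (0 + v * s) \<partial>lborel) =
        (\<integral>\<^sup>+s. ennreal (\<phi> (v * s)) * indicator {c..} s \<partial>lborel)"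
      using v by (intro nn_integral_cong) (auto simp: mult.commute split: split_indicator)
    finally have "ennreal (\<phi> v) * (\<integral>\<^sup>+u. ennreal (\<phi> u) * indicator {c * v..} u \<partial>lborel) =
        ennreal (\<phi> v * v) * (\<integral>\<^sup>+s. ennreal (\<phi> (v * s)) * indicator {c..} s \<partial>lborel)"
      using v by (simp add: ennreal_mult mult.assoc)
    also have "\<dots> = (\<integral>\<^sup>+s. ennreal (\<phi> v * v) * (ennreal (\<phi> (v * s)) * indicator {c..} s) \<partial>lborel)"
      by (rule nn_integral_cmult[symmetric]) measurable
    also have "\<dots> = (\<integral>\<^sup>+s. ennreal (v * \<phi> (v * s) * \<phi> v) * indicator {c..} s \<partial>lborel)"
      using v by (intro nn_integral_cong) (simp add: ennreal_mult[symmetric] mult_ac)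
    finally show ?thesis .
  qed
  have "(\<integral>\<^sup>+v. ennreal (\<phi> v) * indicator {0..} v * (\<integral>\<^sup>+u. ennreal (\<phi> u)
      * indicator {c * v..} u \<partial>lborel) \<partial>lborel) =
      (\<integral>\<^sup>+v. \<integral>\<^sup>+s. ennreal (v * \<phi> (v * s) * \<phi> v)
          * indicator {c..} s * indicator {0..} v \<partial>lborel \<partial>lborel)"
  proof (intro nn_integral_cong_AE, use AE_lborel_singleton[of 0] in eventually_elim)
    fix v :: real assume "v \<noteq> 0"
    show "ennreal (\<phi> v) * indicator {0..} v * (\<integral>\<^sup>+u. ennreal (\<phi> u)
        * indicator {c * v..} u \<partial>lborel) =
      (\<integral>\<^sup>+s. ennreal (v * \<phi> (v * s) * \<phi> v) * indicator {c..} s * indicator {0..} v \<partial>lborel)"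
    proof (cases "v > 0")
      case True
      then show ?thesis using S1[OF True] by (simp add: nn_integral_multc)
    next
      case False
      then show ?thesis using \<open>v \<noteq> 0\<close> by simp
    qed
  qed
  also have "\<dots> = (\<integral>\<^sup>+s. \<integral>\<^sup>+v. ennreal (v * \<phi> (v * s) * \<phi> v)
      * indicator {c..} s * indicator {0..} v \<partial>lborel \<partial>lborel)"
    by (rule nn_integral_lborel_swap) measurable
  also have "\<dots> = (\<integral>\<^sup>+s. ennreal (1 / (2 * pi * (1 + s\<^sup>2))) * indicator {c..} s \<partial>lborel)"
  proof (intro nn_integral_cong)
    fix s :: real
    show "(\<integral>\<^sup>+v. ennreal (v * \<phi> (v * s) * \<phi> v) * indicator {c..} s * indicator {0..} v \<partial>lborel) =
        ennreal (1 / (2 * pi * (1 + s\<^sup>2))) * indicator {c..} s"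
      using nn_integral_std_normal_ray[of s] by (auto split: split_indicator)
  qed
  also have "\<dots> = ennreal ((pi / 2) / (2 * pi) - arctan c / (2 * pi))"
  proof (rule nn_integral_FTC_atLeast)
    show "((\<lambda>x. arctan x / (2 * pi)) \<longlongrightarrow> (pi / 2) / (2 * pi)) at_top"
      by (intro tendsto_intros tendsto_arctan_at_top, simp)
    show "DERIV (\<lambda>x. arctan x / (2 * pi)) x :> 1 / (2 * pi * (1 + x\<^sup>2))" for x
      by (auto intro!: derivative_eq_intros simp: field_simps power2_eq_square add_nonneg_eq_0_iff)
  qed (auto simp: add_pos_nonneg)
  also have "(pi / 2) / (2 * pi) - arctan c / (2 * pi) = 1/4 - arctan c / (2 * pi)" by simp
  finally show ?thesis .
qed

section \<open>Wedge integrals of the standard normal pair\<close>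

lemma std_normal_pair_eq_density: "std_normal_pair =
    density (lborel \<Otimes>\<^sub>M lborel) (\<lambda>(x,y). ennreal (\<phi> x) * ennreal (\<phi> y))"
  by (rule pair_measure_density) (auto intro: prob_space_imp_sigma_finite prob_space_std_normal
      lborel.sigma_finite_measure_axioms)

lemma nn_integral_std_normal_pair_iterated:
  fixes f :: "real \<times> real \<Rightarrow> ennreal"
  assumes [measurable]: "f \<in> borel_measurable (borel \<Otimes>\<^sub>M borel)"
  shows "(\<integral>\<^sup>+z. f z \<partial>std_normal_pair) = (\<integral>\<^sup>+u. \<integral>\<^sup>+v. ennreal (\<phi> u) * ennreal (\<phi> v) * f (u, v)
      \<partial>lborel \<partial>lborel)"
    and "(\<integral>\<^sup>+z. f z \<partial>std_normal_pair) = (\<integral>\<^sup>+v. \<integral>\<^sup>+u. ennreal (\<phi> u) * ennreal (\<phi> v) * f (u, v)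
        \<partial>lborel \<partial>lborel)"
proof -
  have m: "(\<lambda>z. (case z of (x, y) \<Rightarrow> ennreal (\<phi> x) * ennreal (\<phi> y)) * f z)
      \<in> borel_measurable (lborel \<Otimes>\<^sub>M lborel)"
    by measurable
  have "(\<integral>\<^sup>+z. f z \<partial>std_normal_pair) = (\<integral>\<^sup>+z. (case z of (x, y) \<Rightarrow> ennreal (\<phi> x) * ennreal (\<phi> y))
      * f z \<partial>(lborel \<Otimes>\<^sub>M lborel))"
    by (subst std_normal_pair_eq_density) (rule nn_integral_density, measurable)
  note eq = this
  show "(\<integral>\<^sup>+z. f z \<partial>std_normal_pair) = (\<integral>\<^sup>+u. \<integral>\<^sup>+v. ennreal (\<phi> u) * ennreal (\<phi> v) * f (u, v)
      \<partial>lborel \<partial>lborel)"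
    unfolding eq lborel.nn_integral_fst[OF m, symmetric] by simp
  show "(\<integral>\<^sup>+z. f z \<partial>std_normal_pair) = (\<integral>\<^sup>+v. \<integral>\<^sup>+u. ennreal (\<phi> u) * ennreal (\<phi> v) * f (u, v)
      \<partial>lborel \<partial>lborel)"
    unfolding eq lborel_pair.nn_integral_snd[OF m, symmetric] by simp
qed

lemma borel_measurable_nn_integral_std_normal:
  fixes h :: "real \<times> real \<Rightarrow> ennreal"
  assumes [measurable]: "h \<in> borel_measurable (borel \<Otimes>\<^sub>M borel)"
  shows "(\<lambda>v. \<integral>\<^sup>+u. ennreal (\<phi> u) * h (u, v) \<partial>lborel) \<in> borel_measurable borel"
    and "(\<lambda>u. \<integral>\<^sup>+v. ennreal (\<phi> v) * h (u, v) \<partial>lborel) \<in> borel_measurable borel"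
proof -
  have "(\<lambda>x::real \<times> real. ennreal (\<phi> (snd x)) * h (snd x, fst x))
      \<in> borel_measurable (borel \<Otimes>\<^sub>M borel)"
    by measurable
  then have mh: "(\<lambda>(v, u). ennreal (\<phi> u) * h (u, v)) \<in> borel_measurable (lborel \<Otimes>\<^sub>M lborel)"
    by (simp add: borel_measurable_lborel_pair split_beta')
  have "(\<lambda>v. \<integral>\<^sup>+u. ennreal (\<phi> u) * h (u, v) \<partial>lborel) \<in> borel_measurable lborel"
    using lborel.borel_measurable_nn_integral[OF mh] by simp
  then show "(\<lambda>v. \<integral>\<^sup>+u. ennreal (\<phi> u) * h (u, v) \<partial>lborel) \<in> borel_measurable borel"
    by (simp add: measurable_lborel1[symmetric])
  have "(\<lambda>x::real \<times> real. ennreal (\<phi> (snd x)) * h (fst x, snd x))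
      \<in> borel_measurable (borel \<Otimes>\<^sub>M borel)"
    by measurable
  then have mh: "(\<lambda>(u, v). ennreal (\<phi> v) * h (u, v)) \<in> borel_measurable (lborel \<Otimes>\<^sub>M lborel)"
    by (simp add: borel_measurable_lborel_pair split_beta')
  have "(\<lambda>u. \<integral>\<^sup>+v. ennreal (\<phi> v) * h (u, v) \<partial>lborel) \<in> borel_measurable lborel"
    using lborel.borel_measurable_nn_integral[OF mh] by simp
  then show "(\<lambda>u. \<integral>\<^sup>+v. ennreal (\<phi> v) * h (u, v) \<partial>lborel) \<in> borel_measurable borel"
    by (simp add: measurable_lborel1[symmetric])
qed

lemma nn_integral_std_normal_pair_fst_outer:
  fixes h :: "real \<times> real \<Rightarrow> ennreal"
  assumes [measurable]: "h \<in> borel_measurable (borel \<Otimes>\<^sub>M borel)"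
  shows "(\<integral>\<^sup>+z. h z \<partial>std_normal_pair) = (\<integral>\<^sup>+u. ennreal (\<phi> u) * (\<integral>\<^sup>+v. ennreal (\<phi> v) * h (u, v)
      \<partial>lborel) \<partial>lborel)"
proof -
  have "(\<integral>\<^sup>+z. h z \<partial>std_normal_pair) = (\<integral>\<^sup>+u. \<integral>\<^sup>+v. ennreal (\<phi> u) * ennreal (\<phi> v) * h (u, v)
      \<partial>lborel \<partial>lborel)"
    by (rule nn_integral_std_normal_pair_iterated(1)) measurable
  also have "\<dots> = (\<integral>\<^sup>+u. ennreal (\<phi> u) * (\<integral>\<^sup>+v. ennreal (\<phi> v) * h (u, v) \<partial>lborel) \<partial>lborel)"
    by (intro nn_integral_cong) (simp add: nn_integral_cmult[symmetric] mult_ac)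
  finally show ?thesis .
qed

lemma nn_integral_std_normal_pair_even_snd:
  fixes h :: "real \<times> real \<Rightarrow> ennreal"
  assumes [measurable]: "h \<in> borel_measurable (borel \<Otimes>\<^sub>M borel)" and ev: "\<And>u v. h (u, - v) = h (u, v)"
  shows "(\<integral>\<^sup>+z. h z \<partial>std_normal_pair) = 2 * (\<integral>\<^sup>+v. ennreal (\<phi> v)
      * indicator {0..} v * (\<integral>\<^sup>+u. ennreal (\<phi> u) * h (u, v) \<partial>lborel) \<partial>lborel)"
proof -
  define F where "F v = ennreal (\<phi> v) * (\<integral>\<^sup>+u. ennreal (\<phi> u) * h (u, v) \<partial>lborel)" for v
  have [measurable]: "F \<in> borel_measurable borel"
    unfolding F_def using borel_measurable_nn_integral_std_normal(1)[OF assms(1)] by measurable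
  have "(\<integral>\<^sup>+z. h z \<partial>std_normal_pair) = (\<integral>\<^sup>+v. \<integral>\<^sup>+u. ennreal (\<phi> u) * ennreal (\<phi> v) * h (u, v)
      \<partial>lborel \<partial>lborel)"
    by (rule nn_integral_std_normal_pair_iterated(2)) measurable
  also have "\<dots> = (\<integral>\<^sup>+v. F v \<partial>lborel)"
    unfolding F_def by (intro nn_integral_cong) (simp add: nn_integral_cmult[symmetric] mult_ac)
  also have "\<dots> = 2 * (\<integral>\<^sup>+v. F v * indicator {0..} v \<partial>lborel)"
    by (rule nn_integral_lborel_even) (auto simp: F_def ev std_normal_density_minus)
  finally show ?thesis by (simp add: F_def mult_ac)
qed

definition wedge :: "real \<Rightarrow> (real \<times> real) set" where
  "wedge c = {z. c * \<bar>snd z\<bar> \<le> fst z}"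

lemma wedge_measurable[measurable]: "wedge c \<in> sets (borel \<Otimes>\<^sub>M borel)"
proof -
  have "wedge c \<in> sets borel"
    unfolding wedge_def by (rule borel_closed) (intro closed_Collect_le continuous_intros)
  then show ?thesis unfolding borel_prod .
qed

lemma indicator_wedge_minus_snd: "indicator (wedge c) (u, - v) = indicator (wedge c) (u, v)"
  by (simp add: wedge_def indicator_def)

lemma nn_integral_wedge:
  assumes c: "c \<ge> 0"
  shows "(\<integral>\<^sup>+z. indicator (wedge c) z \<partial>std_normal_pair) = ennreal (1/2 - arctan c / pi)"
proof -
  have "(\<integral>\<^sup>+z. indicator (wedge c) z \<partial>std_normal_pair) =
      2 * (\<integral>\<^sup>+v. ennreal (\<phi> v) * indicator {0..} v * (\<integral>\<^sup>+u. ennreal (\<phi> u) * indicator (wedge c)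
          (u, v) \<partial>lborel) \<partial>lborel)"
    by (rule nn_integral_std_normal_pair_even_snd) (auto simp: indicator_wedge_minus_snd)
  also have "(\<integral>\<^sup>+v. ennreal (\<phi> v) * indicator {0..} v * (\<integral>\<^sup>+u. ennreal (\<phi> u) * indicator (wedge c)
      (u, v) \<partial>lborel) \<partial>lborel) =
      (\<integral>\<^sup>+v. ennreal (\<phi> v) * indicator {0..} v * (\<integral>\<^sup>+u. ennreal (\<phi> u)
          * indicator {c * v..} u \<partial>lborel) \<partial>lborel)"
    by (intro nn_integral_cong) (auto simp: wedge_def indicator_def)
  also have "\<dots> = ennreal (1/4 - arctan c / (2 *
      pi))" by (rule nn_integral_std_normal_wedge_half[OF c])
  finally have "(\<integral>\<^sup>+z. indicator (wedge c) z \<partial>std_normal_pair) =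
      2 * ennreal (1/4 - arctan c / (2 * pi))" .
  also have "\<dots> = ennreal (1/2 - arctan c / pi)"
  proof -
    have "arctan c < pi / 2" by (rule arctan_ubound)
    then have "0 \<le> 1/4 - arctan c / (2 * pi)" by (simp add: field_simps)
    then have "ennreal (1/2 - arctan c / pi) = ennreal 2 * ennreal (1/4 - arctan c / (2 * pi))"
      by (subst ennreal_mult[symmetric]) (auto simp: field_simps)
    then show ?thesis by simp
  qed
  finally show ?thesis .
qed

lemma nn_integral_wedge_fst:
  assumes c: "c \<ge> 0"
  shows "(\<integral>\<^sup>+z. ennreal (fst z) * indicator (wedge c) z \<partial>std_normal_pair) =
      ennreal (1 / sqrt (2 * pi * (1 + c\<^sup>2)))"
proof -
  have b: "(1 + c\<^sup>2) / 2 > 0" by (simp add: add_pos_nonneg)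
  have "(\<integral>\<^sup>+z. ennreal (fst z) * indicator (wedge c) z \<partial>std_normal_pair) =
      2 * (\<integral>\<^sup>+v. ennreal (\<phi> v) * indicator {0..} v * (\<integral>\<^sup>+u. ennreal (\<phi> u) * (ennreal (fst (u, v))
          * indicator (wedge c) (u, v)) \<partial>lborel) \<partial>lborel)"
    by (rule nn_integral_std_normal_pair_even_snd) (auto simp: indicator_wedge_minus_snd)
  also have "(\<integral>\<^sup>+v. ennreal (\<phi> v) * indicator {0..} v * (\<integral>\<^sup>+u. ennreal (\<phi> u)
      * (ennreal (fst (u, v)) * indicator (wedge c) (u, v)) \<partial>lborel) \<partial>lborel) =
      (\<integral>\<^sup>+v. ennreal (1 / (2 * pi)) * (ennreal (exp (- ((1 +
          c\<^sup>2) / 2 * v\<^sup>2))) * indicator {0..} v) \<partial>lborel)"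
  proof (intro nn_integral_cong)
    fix v :: real
    show "ennreal (\<phi> v) * indicator {0..} v * (\<integral>\<^sup>+u. ennreal (\<phi> u) * (ennreal (fst (u, v))
        * indicator (wedge c) (u, v)) \<partial>lborel) =
      ennreal (1 / (2 * pi)) * (ennreal (exp (- ((1 + c\<^sup>2) / 2 * v\<^sup>2))) * indicator {0..} v)"
    proof (cases "v \<ge> 0")
      case True
      have cv: "0 \<le> c * v" using True c by simp
      have "(\<integral>\<^sup>+u. ennreal (\<phi> u) * (ennreal (fst (u, v)) * indicator (wedge c) (u, v)) \<partial>lborel) =
          (\<integral>\<^sup>+u. ennreal (\<phi> u * u) * indicator {c * v..} u \<partial>lborel)"
      proof (intro nn_integral_cong)
        fix u :: real
        show "ennreal (\<phi> u) * (ennreal (fst (u, v)) * indicator (wedge c) (u, v)) =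
            ennreal (\<phi> u * u) * indicator {c * v..} u"
        proof (cases "c * v \<le> u")
          case True
          then have "0 \<le> u" using cv by linarith
          then show ?thesis using True \<open>0 \<le> v\<close> by (simp add: wedge_def ennreal_mult)
        qed (use \<open>0 \<le> v\<close> in \<open>auto simp: wedge_def\<close>)
      qed
      also have "\<dots> = ennreal (\<phi> (c * v))" using True c by (simp add:
          nn_integral_std_normal_first_moment_tail)
      finally show ?thesis using True std_normal_density_mult_scaled[of v c]
        by (simp add: ennreal_mult[symmetric])
    qed simp
  qed
  also have "\<dots> = ennreal (1 / (2 * pi)) * ennreal (sqrt pi / (2 * sqrt ((1 + c\<^sup>2) / 2)))"
    using nn_integral_exp_neg_square[OF b] by (subst nn_integral_cmult) auto
  also have "ennreal (1 / (2 * pi)) * ennreal (sqrt pi / (2 * sqrt ((1 + c\<^sup>2) / 2))) =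
      ennreal ((1 / (2 * pi)) * (sqrt pi / (2 * sqrt ((1 + c\<^sup>2) / 2))))"
    by (rule ennreal_mult[symmetric]) auto
  also have "2 * ennreal ((1 / (2 * pi)) * (sqrt pi / (2 * sqrt ((1 + c\<^sup>2) / 2)))) =
      ennreal (1 / sqrt (2 * pi * (1 + c\<^sup>2)))"
  proof -
    have "2 * pi * (1 + c\<^sup>2) = 2\<^sup>2 * pi * ((1 + c\<^sup>2) / 2)"
      by (simp add: power2_eq_square)
    then have "sqrt (2 * pi * (1 + c\<^sup>2)) = 2 * sqrt pi * sqrt ((1 + c\<^sup>2) / 2)"
      by (simp only: real_sqrt_mult real_sqrt_abs)
    moreover have "2 * ((1 / (2 * pi)) * (sqrt pi / (2 * sqrt ((1 + c\<^sup>2) / 2)))) =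
        1 / (2 * sqrt pi * sqrt ((1 + c\<^sup>2) / 2))"
    proof -
      have "sqrt pi * sqrt pi = pi"
        by simp
      then show ?thesis
        using b by (simp add: field_simps)
    qed
    moreover have "2 * ennreal x = ennreal (2 * x)" if "0 \<le> x" for x :: real
      using that by (simp add: ennreal_mult)
    ultimately show ?thesis
      by simp
  qed
  finally show ?thesis .
qed

lemma nn_integral_wedge_fst_square:
  assumes c: "c \<ge> 0"
  shows "(\<integral>\<^sup>+z. ennreal ((fst z)\<^sup>2) * indicator (wedge c) z \<partial>std_normal_pair) =
      ennreal (c / (pi * (1 + c\<^sup>2))) + (\<integral>\<^sup>+z. indicator (wedge c) z \<partial>std_normal_pair)"
proof -
  have b: "(1 + c\<^sup>2) / 2 > 0" by (simp add: add_pos_nonneg)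
  have J: "(\<integral>\<^sup>+z. indicator (wedge c) z \<partial>std_normal_pair) =
      2 * (\<integral>\<^sup>+v. ennreal (\<phi> v) * indicator {0..} v * (\<integral>\<^sup>+u. ennreal (\<phi> u) * indicator (wedge c)
          (u, v) \<partial>lborel) \<partial>lborel)"
    by (rule nn_integral_std_normal_pair_even_snd) (auto simp: indicator_wedge_minus_snd)
  have "(\<integral>\<^sup>+z. ennreal ((fst z)\<^sup>2) * indicator (wedge c) z \<partial>std_normal_pair) =
      2 * (\<integral>\<^sup>+v. ennreal (\<phi> v) * indicator {0..} v * (\<integral>\<^sup>+u. ennreal (\<phi> u)
          * (ennreal ((fst (u, v))\<^sup>2) * indicator (wedge c) (u, v)) \<partial>lborel) \<partial>lborel)"
    by (rule nn_integral_std_normal_pair_even_snd) (auto simp: indicator_wedge_minus_snd)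
  also have "(\<integral>\<^sup>+v. ennreal (\<phi> v) * indicator {0..} v * (\<integral>\<^sup>+u. ennreal (\<phi> u)
      * (ennreal ((fst (u, v))\<^sup>2) * indicator (wedge c) (u, v)) \<partial>lborel) \<partial>lborel) =
      (\<integral>\<^sup>+v. ennreal (c / (2 * pi)) * (ennreal (v * exp (- ((1 +
          c\<^sup>2) / 2 * v\<^sup>2))) * indicator {0..} v) +
         ennreal (\<phi> v) * indicator {0..} v * (\<integral>\<^sup>+u. ennreal (\<phi> u) * indicator (wedge c) (u, v)
             \<partial>lborel) \<partial>lborel)"
  proof (intro nn_integral_cong)
    fix v :: real
    show "ennreal (\<phi> v) * indicator {0..} v * (\<integral>\<^sup>+u. ennreal (\<phi> u) * (ennreal ((fst (u, v))\<^sup>2)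
        * indicator (wedge c) (u, v)) \<partial>lborel) =
      ennreal (c / (2 * pi)) * (ennreal (v * exp (- ((1 + c\<^sup>2) / 2 * v\<^sup>2))) * indicator {0..} v) +
         ennreal (\<phi> v) * indicator {0..} v * (\<integral>\<^sup>+u. ennreal (\<phi> u) * indicator (wedge c) (u, v)
             \<partial>lborel)"
    proof (cases "v \<ge> 0")
      case True
      have "(\<integral>\<^sup>+u. ennreal (\<phi> u) * (ennreal ((fst (u, v))\<^sup>2) * indicator (wedge c) (u, v))
          \<partial>lborel) = (\<integral>\<^sup>+u. ennreal (\<phi> u * u\<^sup>2) * indicator {c * v..} u \<partial>lborel)"
        using True c by (intro nn_integral_cong)
            (auto simp: wedge_def ennreal_mult split: split_indicator)
      also have "\<dots> = ennreal (c * v * \<phi> (c * v)) +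
          (\<integral>\<^sup>+u. ennreal (\<phi> u) * indicator {c * v..} u \<partial>lborel)"
        using True c by (simp add: nn_integral_std_normal_second_moment_tail)
      also have "(\<integral>\<^sup>+u. ennreal (\<phi> u) * indicator {c * v..} u \<partial>lborel) =
          (\<integral>\<^sup>+u. ennreal (\<phi> u) * indicator (wedge c) (u, v) \<partial>lborel)"
        using True by (intro nn_integral_cong) (auto simp: wedge_def split: split_indicator)
      finally have e: "(\<integral>\<^sup>+u. ennreal (\<phi> u) * (ennreal ((fst (u, v))\<^sup>2) * indicator (wedge c)
          (u, v)) \<partial>lborel) =
          ennreal (c * v * \<phi> (c * v)) + (\<integral>\<^sup>+u. ennreal (\<phi> u) * indicator (wedge c) (u, v)
              \<partial>lborel)" .
      have "ennreal (\<phi> v) * ennreal (c * v * \<phi> (c * v)) =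
          ennreal (c / (2 * pi)) * ennreal (v * exp (- ((1 + c\<^sup>2) / 2 * v\<^sup>2)))"
      proof -
        have "\<phi> v * (c * v * \<phi> (c * v)) = (c / (2 * pi)) * (v * exp (- ((1 + c\<^sup>2) / 2 * v\<^sup>2)))"
          using std_normal_density_mult_scaled[of v c] by (simp add: field_simps)
        then show ?thesis using True c by (simp add: ennreal_mult[symmetric])
      qed
      then show ?thesis using True unfolding e by (simp add: distrib_left)
    qed simp
  qed
  also have "\<dots> = ennreal (c / (2 * pi)) * ennreal (1 / (2 * ((1 + c\<^sup>2) / 2))) +
      (\<integral>\<^sup>+v. ennreal (\<phi> v) * indicator {0..} v * (\<integral>\<^sup>+u. ennreal (\<phi> u) * indicator (wedge c) (u, v)
          \<partial>lborel) \<partial>lborel)"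
  proof -
    have [measurable]: "(\<lambda>v. \<integral>\<^sup>+u. ennreal (\<phi> u) * indicator (wedge c) (u, v) \<partial>lborel)
        \<in> borel_measurable borel"
      by (rule borel_measurable_nn_integral_std_normal(1)) measurable
    show ?thesis using nn_integral_mult_exp_neg_square[OF b] by (subst nn_integral_add)
        (auto simp: nn_integral_cmult)
  qed
  finally have "(\<integral>\<^sup>+z. ennreal ((fst z)\<^sup>2) * indicator (wedge c) z \<partial>std_normal_pair) =
      2 * (ennreal (c / (2 * pi)) * ennreal (1 / (2 * ((1 + c\<^sup>2) / 2)))) +
      2 * (\<integral>\<^sup>+v. ennreal (\<phi> v) * indicator {0..} v * (\<integral>\<^sup>+u. ennreal (\<phi> u) * indicator (wedge c)
          (u, v) \<partial>lborel) \<partial>lborel)"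
    by (simp only: distrib_left)
  moreover have "2 * (ennreal (c / (2 * pi)) * ennreal (1 / (2 * ((1 + c\<^sup>2) / 2)))) =
      ennreal (c / (pi * (1 + c\<^sup>2)))"
  proof -
    have half: "2 * (y / 2) = y" for y :: real
      by simp
    have "ennreal (c / (2 * pi)) * ennreal (1 / (2 * ((1 + c\<^sup>2) / 2))) =
        ennreal (c / (2 * pi) * (1 / (2 * ((1 + c\<^sup>2) / 2))))"
      by (rule ennreal_mult[symmetric]) (use c b in auto)
    moreover have "2 * ennreal x = ennreal (2 * x)" if "0 \<le> x" for x :: real
      using that by (simp add: ennreal_mult)
    ultimately have "2 * (ennreal (c / (2 * pi)) * ennreal (1 / (2 * ((1 + c\<^sup>2) / 2)))) =
        ennreal (2 * (c / (2 * pi) * (1 / (2 * ((1 + c\<^sup>2) / 2)))))"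
      using c b by simp
    also have "2 * (c / (2 * pi) * (1 / (2 * ((1 + c\<^sup>2) / 2)))) =
        2 * (c / (2 * pi) * (1 / (1 + c\<^sup>2)))"
      by (simp only: half)
    also have "\<dots> = c / (pi * (1 + c\<^sup>2))"
      by simp
    finally show ?thesis .
  qed
  ultimately show ?thesis unfolding J by simp
qed

text \<open>For \<open>u \<ge> 0\<close> the section of the wedge at \<open>u\<close> is \<open>\<bar>v\<bar> \<le> u / c\<close>; integrate by parts on
  \<open>[0, u / c]\<close>.\<close>

lemma nn_integral_wedge_section_snd_square:
  assumes c: "c > 0"
  shows "(\<integral>\<^sup>+v. ennreal (\<phi> v) * (ennreal (v\<^sup>2) * indicator (wedge c) (u, v)) \<partial>lborel)
      + ennreal (2 * (u / c) * \<phi> (u / c)) * indicator {0..} u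
    = (\<integral>\<^sup>+v. ennreal (\<phi> v) * indicator (wedge c) (u, v) \<partial>lborel)"
    (is "?I1 + _ = ?I0")
proof (cases "u \<ge> 0")
  case False
  have "indicator (wedge c) (u, v) = (0::ennreal)" for v
  proof -
    have "c * \<bar>v\<bar> \<ge> 0" using c by simp
    then have "\<not> (c * \<bar>v\<bar> \<le> u)" using False by linarith
    then show ?thesis by (simp add: wedge_def)
  qed
  then show ?thesis using False by simp
next
  case True
  define L where "L = u / c"
  have L: "L \<ge> 0" using True c by (simp add: L_def)
  have reg: "indicator (wedge c) (u, v) * indicator {0..} v = (indicator {0..L} v :: ennreal)" for v
    using c by (cases "0 \<le> v") (simp_all add: wedge_def L_def indicator_def pos_le_divide_eq mult.commute)
  have "?I1 = 2 * (\<integral>\<^sup>+v. ennreal (\<phi> v) * (ennreal (v\<^sup>2) * indicator (wedge c) (u, v))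
      * indicator {0..} v \<partial>lborel)"
    by (rule nn_integral_lborel_even) (auto simp: std_normal_density_minus
        indicator_wedge_minus_snd)
  also have "(\<integral>\<^sup>+v. ennreal (\<phi> v) * (ennreal (v\<^sup>2) * indicator (wedge c) (u, v))
      * indicator {0..} v \<partial>lborel) =
      (\<integral>\<^sup>+v. ennreal (\<phi> v * v\<^sup>2) * indicator {0..L} v \<partial>lborel)"
    by (intro nn_integral_cong) (simp add: mult.assoc reg ennreal_mult)
  finally have e1: "?I1 = 2 * (\<integral>\<^sup>+v. ennreal (\<phi> v * v\<^sup>2) * indicator {0..L} v \<partial>lborel)" .
  have "?I0 = 2 * (\<integral>\<^sup>+v. ennreal (\<phi> v) * indicator (wedge c) (u, v) * indicator {0..} v \<partial>lborel)"
    by (rule nn_integral_lborel_even) (auto simp: std_normal_density_minus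
        indicator_wedge_minus_snd)
  also have "(\<integral>\<^sup>+v. ennreal (\<phi> v) * indicator (wedge c) (u, v) * indicator {0..} v \<partial>lborel) =
      (\<integral>\<^sup>+v. ennreal (\<phi> v) * indicator {0..L} v \<partial>lborel)"
    by (intro nn_integral_cong) (simp add: mult.assoc reg)
  finally have e0: "?I0 = 2 * (\<integral>\<^sup>+v. ennreal (\<phi> v) * indicator {0..L} v \<partial>lborel)" .
  have "2 * ennreal (L * \<phi> L) = ennreal (2 * (L * \<phi> L))" using L by (simp add: ennreal_mult)
  moreover have "ennreal (2 * (u / c) * \<phi> (u / c)) =
      ennreal (2 * (L * \<phi> L))" by (simp add: L_def mult.assoc)
  ultimately have "ennreal (2 * (u / c) * \<phi> (u / c)) = 2 * ennreal (L * \<phi> L)" by simp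
  then show ?thesis using True unfolding e1 e0 nn_integral_std_normal_second_moment_Icc[OF
      L, symmetric] by (simp add: distrib_left)
qed

lemma nn_integral_wedge_snd_square:
  assumes c: "c > 0"
  shows "(\<integral>\<^sup>+z. ennreal ((snd z)\<^sup>2) * indicator (wedge c) z \<partial>std_normal_pair) +
      ennreal (c / (pi * (1 + c\<^sup>2))) = (\<integral>\<^sup>+z. indicator (wedge c) z \<partial>std_normal_pair)"
proof -
  define I1 where "I1 u = (\<integral>\<^sup>+v. ennreal (\<phi> v) * (ennreal ((snd (u, v))\<^sup>2) * indicator (wedge c)
      (u, v)) \<partial>lborel)" for u
  define I0 where "I0 u = (\<integral>\<^sup>+v. ennreal (\<phi> v) * indicator (wedge c) (u, v) \<partial>lborel)" for u
  have b: "(1 + (1/c)\<^sup>2) / 2 > 0" by (simp add: add_pos_nonneg)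
  have key: "I1 u + ennreal (2 * (u / c) * \<phi> (u / c)) * indicator {0..} u = I0 u" for u
    using nn_integral_wedge_section_snd_square[OF c, of u] by (simp add: I1_def I0_def)
  have "(\<integral>\<^sup>+z. indicator (wedge c) z \<partial>std_normal_pair) = (\<integral>\<^sup>+u. ennreal (\<phi> u) * I0 u \<partial>lborel)"
    unfolding I0_def by (rule nn_integral_std_normal_pair_fst_outer) measurable
  also have "\<dots> = (\<integral>\<^sup>+u. ennreal (\<phi> u) * I1 u +
      ennreal ((2 / c) * (1 / (2 * pi))) * (ennreal (u * exp (- ((1 +
          (1/c)\<^sup>2) / 2 * u\<^sup>2))) * indicator {0..} u) \<partial>lborel)"
  proof (intro nn_integral_cong)
    fix u :: real
    have "\<phi> u * (2 * (u / c) * \<phi> (u / c)) = (2 / c) * (1 / (2 * pi)) * (u * exp (- ((1 +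
        (1/c)\<^sup>2) / 2 * u\<^sup>2)))"
    proof -
      have p: "\<phi> u * \<phi> (u / c) = (1 / (2 * pi)) * exp (- ((1 + (1/c)\<^sup>2) / 2 * u\<^sup>2))"
        using std_normal_density_mult_scaled[of u "1/c"] by (simp add: mult.commute)
      have "\<phi> u * (2 * (u / c) * \<phi> (u / c)) = (2 / c) * u * (\<phi> u * \<phi> (u / c))"
        by (simp add: algebra_simps)
      also have "\<dots> = (2 / c) * (1 / (2 * pi)) * (u * exp (- ((1 + (1/c)\<^sup>2) / 2 * u\<^sup>2)))"
        unfolding p by (simp add: algebra_simps)
      finally show ?thesis .
    qed
    then have "ennreal (\<phi> u) * (ennreal (2 * (u / c) * \<phi> (u / c)) * indicator {0..} u) =
        ennreal ((2 / c) * (1 / (2 * pi))) * (ennreal (u * exp (- ((1 +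
            (1/c)\<^sup>2) / 2 * u\<^sup>2))) * indicator {0..} u)"
      using c by (auto simp: ennreal_mult[symmetric] split: split_indicator)
    then show "ennreal (\<phi> u) * I0 u = ennreal (\<phi> u) * I1 u +
        ennreal ((2 / c) * (1 / (2 * pi))) * (ennreal (u * exp (- ((1 +
            (1/c)\<^sup>2) / 2 * u\<^sup>2))) * indicator {0..} u)"
      unfolding key[of u, symmetric] by (simp add: distrib_left)
  qed
  also have "\<dots> = (\<integral>\<^sup>+u. ennreal (\<phi> u) * I1 u \<partial>lborel) +
      ennreal ((2 / c) * (1 / (2 * pi))) * ennreal (1 / (2 * ((1 + (1/c)\<^sup>2) / 2)))"
  proof -
    have [measurable]: "I1 \<in> borel_measurable borel"
      unfolding I1_def by (rule borel_measurable_nn_integral_std_normal(2)) measurable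
    show ?thesis using nn_integral_mult_exp_neg_square[OF b] by (subst nn_integral_add)
        (auto simp: nn_integral_cmult)
  qed
  also have "(\<integral>\<^sup>+u. ennreal (\<phi> u) * I1 u \<partial>lborel) =
      (\<integral>\<^sup>+z. ennreal ((snd z)\<^sup>2) * indicator (wedge c) z \<partial>std_normal_pair)"
    unfolding I1_def by (rule nn_integral_std_normal_pair_fst_outer[symmetric]) measurable
  also have "ennreal ((2 / c) * (1 / (2 * pi))) * ennreal (1 / (2 * ((1 + (1/c)\<^sup>2) / 2))) =
      ennreal ((2 / c) * (1 / (2 * pi)) * (1 / (2 * ((1 + (1/c)\<^sup>2) / 2))))"
    by (rule ennreal_mult[symmetric]) (use c b in auto)
  also have "(2 / c) * (1 / (2 * pi)) * (1 / (2 * ((1 + (1/c)\<^sup>2) / 2))) = c / (pi * (1 + c\<^sup>2))"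
  proof -
    have half: "2 * (y / 2) = y" for y :: real
      by simp
    have "1 + (1/c)\<^sup>2 = (1 + c\<^sup>2) / c\<^sup>2"
      using c by (simp add: field_simps)
    then have "1 / (2 * ((1 + (1/c)\<^sup>2) / 2)) = 1 / ((1 + c\<^sup>2) / c\<^sup>2)"
      by (simp only: half)
    also have "\<dots> = c\<^sup>2 / (1 + c\<^sup>2)"
      by simp
    also have "(2 / c) * (1 / (2 * pi)) * \<dots> = c / (pi * (1 + c\<^sup>2))"
      using c by (simp add: power2_eq_square)
    finally show ?thesis .
  qed
  finally show ?thesis ..
qed

lemma has_bochner_integral_wedge:
  assumes "c \<ge> 0"
  shows "has_bochner_integral std_normal_pair (indicator (wedge c)) (1/2 - arctan c / pi)"
proof (rule has_bochner_integral_nn_integral)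
  show "0 \<le> 1/2 - arctan c / pi"
    using arctan_ubound[of c] by (simp add: field_simps)
  show "(\<integral>\<^sup>+z. ennreal (indicator (wedge c) z) \<partial>std_normal_pair) = ennreal (1/2 - arctan c / pi)"
    using nn_integral_wedge[OF assms] by (simp add: ennreal_indicator)
qed auto

lemma has_bochner_integral_wedge_fst:
  assumes c: "c \<ge> 0"
  shows "has_bochner_integral std_normal_pair (\<lambda>z. indicator (wedge c) z * fst z)
      (1 / sqrt (2 * pi * (1 + c\<^sup>2)))"
proof (rule has_bochner_integral_nn_integral)
  have "0 \<le> indicator (wedge c) z * fst z" for z
  proof (cases "z \<in> wedge c")
    case True
    then have "c * \<bar>snd z\<bar> \<le> fst z"
      by (simp add: wedge_def)
    moreover have "0 \<le> c * \<bar>snd z\<bar>"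
      using c by simp
    ultimately show ?thesis
      using True by simp
  qed simp
  then show "AE z in std_normal_pair. 0 \<le> indicator (wedge c) z * fst z"
    by simp
  have "(\<integral>\<^sup>+z. ennreal (indicator (wedge c) z * fst z) \<partial>std_normal_pair) =
      (\<integral>\<^sup>+z. ennreal (fst z) * indicator (wedge c) z \<partial>std_normal_pair)"
    by (intro nn_integral_cong) (auto simp: indicator_def)
  then show "(\<integral>\<^sup>+z. ennreal (indicator (wedge c) z * fst z) \<partial>std_normal_pair) =
      ennreal (1 / sqrt (2 * pi * (1 + c\<^sup>2)))"
    using nn_integral_wedge_fst[OF c] by simp
qed auto

lemma has_bochner_integral_wedge_fst_square:
  assumes c: "c \<ge> 0"
  shows "has_bochner_integral std_normal_pair (\<lambda>z. indicator (wedge c) z * (fst z)\<^sup>2)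
    (1/2 - arctan c / pi + c / (pi * (1 + c\<^sup>2)))"
proof (rule has_bochner_integral_nn_integral)
  have "0 \<le> 1/2 - arctan c / pi"
    using arctan_ubound[of c] by (simp add: field_simps)
  then show "0 \<le> 1/2 - arctan c / pi + c / (pi * (1 + c\<^sup>2))"
    using c by (simp add: add_pos_nonneg)
  have "(\<integral>\<^sup>+z. ennreal (indicator (wedge c) z * (fst z)\<^sup>2) \<partial>std_normal_pair) =
      (\<integral>\<^sup>+z. ennreal ((fst z)\<^sup>2) * indicator (wedge c) z \<partial>std_normal_pair)"
    by (intro nn_integral_cong) (auto simp: indicator_def)
  also have "\<dots> = ennreal (c / (pi * (1 + c\<^sup>2))) + ennreal (1/2 - arctan c / pi)"
    using nn_integral_wedge_fst_square[OF c] nn_integral_wedge[OF c] by simp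
  also have "\<dots> = ennreal (1/2 - arctan c / pi + c / (pi * (1 + c\<^sup>2)))"
    using c \<open>0 \<le> 1/2 - arctan c / pi\<close> by (simp add: ennreal_plus add_pos_nonneg)
  finally show "(\<integral>\<^sup>+z. ennreal (indicator (wedge c) z * (fst z)\<^sup>2) \<partial>std_normal_pair) =
      ennreal (1/2 - arctan c / pi + c / (pi * (1 + c\<^sup>2)))" .
qed auto

lemma has_bochner_integral_wedge_snd_square:
  assumes c: "c > 0"
  shows "has_bochner_integral std_normal_pair (\<lambda>z. indicator (wedge c) z * (snd z)\<^sup>2)
    (1/2 - arctan c / pi - c / (pi * (1 + c\<^sup>2)))"
proof -
  define k where "k = c / (pi * (1 + c\<^sup>2))"
  define I where "I = (\<integral>\<^sup>+z. ennreal (indicator (wedge c) z * (snd z)\<^sup>2) \<partial>std_normal_pair)"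
  have "0 \<le> k" "0 \<le> 1/2 - arctan c / pi"
    using c arctan_ubound[of c] by (simp_all add: k_def field_simps)
  have "I = (\<integral>\<^sup>+z. ennreal ((snd z)\<^sup>2) * indicator (wedge c) z \<partial>std_normal_pair)"
    unfolding I_def by (intro nn_integral_cong) (auto simp: indicator_def)
  then have sum: "I + ennreal k = ennreal (1/2 - arctan c / pi)"
    using nn_integral_wedge_snd_square[OF c] nn_integral_wedge[of c] c by (simp add: k_def)
  then obtain x where x: "I = ennreal x" "0 \<le> x"
    by (cases I) auto
  with sum have "x + k = 1/2 - arctan c / pi"
    using \<open>0 \<le> k\<close> \<open>0 \<le> 1/2 - arctan c / pi\<close> by (simp add: ennreal_plus[symmetric] del: ennreal_plus)
  with x show ?thesis
    unfolding k_def[symmetric]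
    by (intro has_bochner_integral_nn_integral) (simp_all add: I_def[symmetric])
qed

section \<open>Orthant moments of a standard Gaussian pair\<close>

lemma measure_std_normal_pair_snd_eq_0: "measure std_normal_pair {z. snd z = 0} = 0"
proof -
  have [measurable]: "{z::real \<times> real. snd z = 0} \<in> sets (borel \<Otimes>\<^sub>M borel)"
    unfolding borel_prod by (rule borel_closed) (intro closed_Collect_eq continuous_intros)
  have "(\<integral>\<^sup>+v. ennreal (\<phi> v) * indicator {0::real} v \<partial>lborel) =
      (\<integral>\<^sup>+v. ennreal (\<phi> 0) * indicator {0::real} v \<partial>lborel)"
    by (rule nn_integral_cong) (auto simp: indicator_def)
  also have "\<dots> = 0"
    by (subst nn_integral_cmult_indicator) simp_all
  finally have null: "(\<integral>\<^sup>+v. ennreal (\<phi> v) * indicator {0::real} v \<partial>lborel) = 0" .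
  have "emeasure std_normal_pair {z. snd z = 0} = (\<integral>\<^sup>+z. indicator {z. snd z =
      0} z \<partial>std_normal_pair)"
    by simp
  also have "\<dots> = (\<integral>\<^sup>+u. ennreal (\<phi> u) * (\<integral>\<^sup>+v. ennreal (\<phi> v) * indicator {z. snd z =
      0} (u, v) \<partial>lborel) \<partial>lborel)"
    by (rule nn_integral_std_normal_pair_fst_outer) measurable
  also have "\<dots> = (\<integral>\<^sup>+u. ennreal (\<phi> u) * (\<integral>\<^sup>+v. ennreal (\<phi> v) * indicator {0::real} v \<partial>lborel)
      \<partial>lborel)"
    by (intro nn_integral_cong arg_cong2[where f="(*)"] refl) (auto simp: indicator_def)
  finally show ?thesis
    by (simp add: null measure_def)
qed

lemma correlating_coefficients:
  fixes \<rho> :: real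
  assumes "-1 < \<rho>" "\<rho> \<le> 1"
  defines "a \<equiv> sqrt ((1 + \<rho>) / 2)" and "b \<equiv> sqrt ((1 - \<rho>) / 2)"
  shows "a > 0" "b \<ge> 0" "a\<^sup>2 = (1 + \<rho>) / 2" "b\<^sup>2 = (1 - \<rho>) / 2" "a * b = sqrt (1 - \<rho>\<^sup>2) / 2"
    and "arctan (b / a) = pi / 4 - arcsin \<rho> / 2"
proof -
  show "a > 0" "b \<ge> 0" "a\<^sup>2 = (1 + \<rho>) / 2" "b\<^sup>2 = (1 - \<rho>) / 2"
    using assms by simp_all
  have "a * b = sqrt ((1 - \<rho>\<^sup>2) / 4)"
    unfolding a_def b_def by (simp add: real_sqrt_mult[symmetric] power2_eq_square field_simps)
  then show "a * b = sqrt (1 - \<rho>\<^sup>2) / 2"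
    by (simp add: real_sqrt_divide)
  define \<theta> where "\<theta> = pi / 4 - arcsin \<rho> / 2"
  have "arcsin (-1) < arcsin \<rho>"
    by (rule arcsin_less_arcsin) (use assms in auto)
  then have \<theta>: "0 \<le> \<theta>" "\<theta> < pi / 2"
    using arcsin_bounded[of \<rho>] assms by (auto simp: \<theta>_def)
  have "cos (2 * \<theta>) = \<rho>"
    using assms by (simp add: \<theta>_def cos_sin_eq algebra_simps)
  then have "(cos \<theta>)\<^sup>2 = a\<^sup>2" "(sin \<theta>)\<^sup>2 = b\<^sup>2"
    using cos_double_cos[of \<theta>] cos_double_sin[of \<theta>] assms by (simp_all add: a_def b_def)
  moreover have "cos \<theta> > 0" "sin \<theta> \<ge> 0"
    using \<theta> by (auto intro: cos_gt_zero_pi sin_ge_zero)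
  ultimately have "cos \<theta> = a" "sin \<theta> = b"
    using \<open>a > 0\<close> \<open>b \<ge> 0\<close> by (simp_all add: power2_eq_iff_nonneg)
  then have "arctan (b / a) = arctan (tan \<theta>)"
    by (simp add: tan_def)
  also have "\<dots> = \<theta>"
    by (rule arctan_tan) (use \<theta> in auto)
  finally show "arctan (b / a) = pi / 4 - arcsin \<rho> / 2"
    by (simp add: \<theta>_def)
qed

lemma correlating_map_nonneg_iff:
  fixes \<rho> :: real
  assumes "-1 < \<rho>" "\<rho> \<le> 1"
  shows "(0 \<le> fst (correlating_map \<rho> z) \<and> 0 \<le> snd (correlating_map \<rho> z)) \<longleftrightarrow>
    z \<in> wedge (sqrt ((1 - \<rho>) / 2) / sqrt ((1 + \<rho>) / 2))"
proof -
  define a b where "a = sqrt ((1 + \<rho>) / 2)" and "b = sqrt ((1 - \<rho>) / 2)"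
  note ab = correlating_coefficients[OF assms, folded a_def b_def]
  have "(0 \<le> a * fst z + b * snd z \<and> 0 \<le> a * fst z - b * snd z) \<longleftrightarrow> b * \<bar>snd z\<bar> \<le> a * fst z"
  proof (cases "snd z \<ge> 0")
    case True
    then have "0 \<le> b * snd z"
      using ab(2) by simp
    then show ?thesis
      using True by auto
  next
    case False
    then have "b * snd z \<le> 0"
      using ab(2) by (simp add: mult_nonneg_nonpos)
    then show ?thesis
      using False by auto
  qed
  also have "\<dots> \<longleftrightarrow> b / a * \<bar>snd z\<bar> \<le> fst z"
    using ab(1) by (simp add: field_simps mult.commute)
  finally show ?thesis
    by (simp add: correlating_map_def wedge_def a_def b_def)
qed

context standard_gaussian_pair
begin

definition orthant_event :: "'a set" where
  "orthant_event = {\<omega> \<in> space M. 0 \<le> X \<omega> \<and> 0 \<le> Y \<omega>}"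

lemma orthant_event_measurable [measurable]: "orthant_event \<in> events"
  unfolding orthant_event_def by measurable

lemma integrable_orthant_event:
  fixes Z :: "'a \<Rightarrow> real"
  assumes "integrable M Z"
  shows "integrable M (\<lambda>\<omega>. indicator orthant_event \<omega> * Z \<omega>)"
  using integrable_mult_indicator[OF orthant_event_measurable assms] by simp

lemma integral_eq_std_normal_pair:
  fixes F :: "real \<times> real \<Rightarrow> real"
  assumes [measurable]: "F \<in> borel_measurable (borel \<Otimes>\<^sub>M borel)"
  shows "(\<integral>\<omega>. F (X \<omega>, Y \<omega>) \<partial>M) = (\<integral>z. F (correlating_map \<rho> z) \<partial>std_normal_pair)"
proof -
  have "(\<integral>\<omega>. F (X \<omega>, Y \<omega>) \<partial>M) = (\<integral>p. F p \<partial>distr M (borel \<Otimes>\<^sub>M borel) (\<lambda>\<omega>. (X \<omega>, Y \<omega>)))"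
    by (rule integral_distr[symmetric]) simp_all
  also have "\<dots> = (\<integral>z. F (correlating_map \<rho> z) \<partial>std_normal_pair)"
    unfolding distr_eq_correlating_map by (rule integral_distr) simp_all
  finally show ?thesis .
qed

lemma integral_swap:
  fixes F :: "real \<times> real \<Rightarrow> real"
  assumes [measurable]: "F \<in> borel_measurable (borel \<Otimes>\<^sub>M borel)"
  shows "(\<integral>\<omega>. F (X \<omega>, Y \<omega>) \<partial>M) = (\<integral>\<omega>. F (Y \<omega>, X \<omega>) \<partial>M)"
proof -
  interpret swapped: standard_gaussian_pair M Y X \<rho>
    by (rule swap)
  show ?thesis
    using integral_eq_std_normal_pair[OF assms] swapped.integral_eq_std_normal_pair[OF assms] by simp
qed

lemma integral_orthant_event:
  fixes F :: "real \<times> real \<Rightarrow> real"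
  assumes [measurable]: "F \<in> borel_measurable (borel \<Otimes>\<^sub>M borel)"
  shows "(\<integral>\<omega>. indicator orthant_event \<omega> * F (X \<omega>, Y \<omega>) \<partial>M) =
    (\<integral>z. indicator {p. 0 \<le> fst p \<and> 0 \<le> snd p} (correlating_map \<rho> z) * F (correlating_map \<rho> z)
        \<partial>std_normal_pair)"
    and "(\<integral>\<omega>. indicator orthant_event \<omega> * F (X \<omega>, Y \<omega>) \<partial>M) =
    (\<integral>\<omega>. indicator orthant_event \<omega> * F (Y \<omega>, X \<omega>) \<partial>M)"
proof -
  define Q where "Q = {p :: real \<times> real. 0 \<le> fst p \<and> 0 \<le> snd p}"
  have [measurable]: "Q \<in> sets (borel \<Otimes>\<^sub>M borel)"
    unfolding borel_prod Q_def by (rule borel_closed)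
        (intro closed_Collect_conj closed_Collect_le continuous_intros)
  have "(\<integral>\<omega>. indicator orthant_event \<omega> * F (X \<omega>, Y \<omega>) \<partial>M) =
      (\<integral>\<omega>. indicator Q (X \<omega>, Y \<omega>) * F (X \<omega>, Y \<omega>) \<partial>M)"
    and "(\<integral>\<omega>. indicator orthant_event \<omega> * F (Y \<omega>, X \<omega>) \<partial>M) =
        (\<integral>\<omega>. indicator Q (Y \<omega>, X \<omega>) * F (Y \<omega>, X \<omega>) \<partial>M)"
    by (auto intro!: Bochner_Integration.integral_cong simp: orthant_event_def Q_def indicator_def)
  then show "(\<integral>\<omega>. indicator orthant_event \<omega> * F (X \<omega>, Y \<omega>) \<partial>M) =
      (\<integral>z. indicator {p. 0 \<le> fst p \<and> 0 \<le> snd p} (correlating_map \<rho> z) * F (correlating_map \<rho> z)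
          \<partial>std_normal_pair)"
    and "(\<integral>\<omega>. indicator orthant_event \<omega> * F (X \<omega>, Y \<omega>) \<partial>M) =
      (\<integral>\<omega>. indicator orthant_event \<omega> * F (Y \<omega>, X \<omega>) \<partial>M)"
    using integral_eq_std_normal_pair[of "\<lambda>p. indicator Q p *
        F p"] integral_swap[of "\<lambda>p. indicator Q p * F p"]
    by (simp_all add: Q_def)
qed

text \<open>For \<open>\<rho> = -1\<close> the correlating map sends the plane onto the antidiagonal, which meets the
  closed quadrant only at the origin.\<close>

lemma correlation_gt_minus_one:
  assumes "measure M orthant_event > 0"
  shows "-1 < \<rho>"
proof (rule ccontr)
  assume "\<not> -1 < \<rho>"
  then have "\<rho> = -1"
    using correlation_bounds by simp
  then have "indicator {p. 0 \<le> fst p \<and> 0 \<le> snd p} (correlating_map \<rho> z) = (indicator {z. snd z =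
      0} z :: real)" for z
    by (auto simp: correlating_map_def indicator_def)
  moreover have [measurable]: "{z::real \<times> real. snd z = 0} \<in> sets (borel \<Otimes>\<^sub>M borel)"
    unfolding borel_prod by (rule borel_closed) (intro closed_Collect_eq continuous_intros)
  ultimately have "measure M orthant_event = (\<integral>z. indicator {z. snd z = 0} z \<partial>std_normal_pair)"
    using integral_orthant_event(1)[of "\<lambda>_. 1"] by simp
  also have "\<dots> = measure std_normal_pair {z. snd z = 0}"
    by (simp add: space_pair_measure)
  finally have "measure M orthant_event = measure std_normal_pair {z. snd z = 0}" .
  with assms show False
    by (simp add: measure_std_normal_pair_snd_eq_0)
qed

end

context standard_gaussian_pair
begin

context
  assumes correlation_gt: "-1 < \<rho>"
begin

lemma integral_orthant_event_wedge:
  fixes F :: "real \<times> real \<Rightarrow> real"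
  assumes [measurable]: "F \<in> borel_measurable (borel \<Otimes>\<^sub>M borel)"
  shows "(\<integral>\<omega>. indicator orthant_event \<omega> * F (X \<omega>, Y \<omega>) \<partial>M) =
    (\<integral>z. indicator (wedge (sqrt ((1 - \<rho>) / 2) / sqrt ((1 +
        \<rho>) / 2))) z * F (correlating_map \<rho> z) \<partial>std_normal_pair)"
  unfolding integral_orthant_event(1)[OF assms]
  using correlating_map_nonneg_iff[OF correlation_gt correlation_bounds(2)]
  by (intro Bochner_Integration.integral_cong) (simp_all add: indicator_def)

lemma measure_orthant_event: "measure M orthant_event = (arcsin \<rho> + pi / 2) / (2 * pi)"
proof -
  define a b where "a = sqrt ((1 + \<rho>) / 2)" and "b = sqrt ((1 - \<rho>) / 2)"
  note ab = correlating_coefficients[OF correlation_gt correlation_bounds(2), folded a_def b_def]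
  have "measure M orthant_event = measure std_normal_pair (wedge (b / a))"
    using integral_orthant_event_wedge[of "\<lambda>_. 1"] by (simp add: a_def b_def space_pair_measure)
  also have "\<dots> = 1/2 - arctan (b / a) / pi"
    using has_bochner_integral_integral_eq[OF has_bochner_integral_wedge[of "b / a"]] ab(1,2)
    by (simp add: space_pair_measure)
  finally show ?thesis
    by (simp add: ab(6) field_simps)
qed

lemma orthant_first_moment: "(\<integral>\<omega>. indicator orthant_event \<omega> * X \<omega> \<partial>M) =
    (1 + \<rho>) / (2 * sqrt (2 * pi))"
proof -
  define a b where "a = sqrt ((1 + \<rho>) / 2)" and "b = sqrt ((1 - \<rho>) / 2)"
  note ab = correlating_coefficients[OF correlation_gt correlation_bounds(2), folded a_def b_def]
  have "a\<^sup>2 + b\<^sup>2 = 1"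
    using ab(3,4) by simp
  then have "1 + (b / a)\<^sup>2 = 1 / a\<^sup>2"
    using ab(1) by (simp add: field_simps)
  then have "sqrt (2 * pi * (1 + (b / a)\<^sup>2)) = sqrt (2 * pi) / a"
    using ab(1) by (simp add: real_sqrt_mult real_sqrt_divide)
  moreover have "0 \<le> b / a"
    using ab(1,2) by simp
  ultimately have wedge_fst: "(\<integral>z. indicator (wedge (b / a)) z * fst z \<partial>std_normal_pair) =
      1 / (sqrt (2 * pi) / a)"
    using has_bochner_integral_wedge_fst has_bochner_integral_integral_eq by metis
  have "2 * (\<integral>\<omega>. indicator orthant_event \<omega> * X \<omega> \<partial>M) =
      (\<integral>\<omega>. indicator orthant_event \<omega> * X \<omega> \<partial>M) + (\<integral>\<omega>. indicator orthant_event \<omega> * Y \<omega> \<partial>M)"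
    using integral_orthant_event(2)[of fst] by simp
  also have "\<dots> = (\<integral>\<omega>. indicator orthant_event \<omega> * (X \<omega> + Y \<omega>) \<partial>M)"
    using integrable_orthant_event[OF integrable_moments(1)]
      integrable_orthant_event[OF integrable_moments(2)]
    by (simp add: distrib_left)
  also have "\<dots> = (\<integral>z. indicator (wedge (b / a)) z * (fst (correlating_map \<rho> z) +
      snd (correlating_map \<rho> z)) \<partial>std_normal_pair)"
    using integral_orthant_event_wedge[of "\<lambda>p. fst p + snd p"] by (simp add: a_def b_def)
  also have "\<dots> = (\<integral>z. (2 * a) * (indicator (wedge (b / a)) z * fst z) \<partial>std_normal_pair)"
    by (rule Bochner_Integration.integral_cong)
        (simp_all add: correlating_map_def a_def b_def algebra_simps)
  also have "\<dots> = 2 * a * (1 / (sqrt (2 * pi) / a))"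
    unfolding integral_mult_right_zero wedge_fst ..
  finally show ?thesis
    using ab by (simp add: power2_eq_square field_simps)
qed

text \<open>Under the correlating map \<open>X\<^sup>2 + Y\<^sup>2\<close> and \<open>X Y\<close> become combinations of \<open>a\<^sup>2 u\<^sup>2\<close> and
  \<open>b\<^sup>2 v\<^sup>2\<close>; the \<open>v\<^sup>2\<close>-moment is only available for a proper wedge \<open>b > 0\<close>, but it carries the
  factor \<open>b\<^sup>2\<close>.\<close>

lemma has_bochner_integral_wedge_quadratic:
  defines "a \<equiv> sqrt ((1 + \<rho>) / 2)" and "b \<equiv> sqrt ((1 - \<rho>) / 2)"
    and "P \<equiv> (arcsin \<rho> + pi / 2) / (2 * pi)"
  shows "has_bochner_integral std_normal_pair
    (\<lambda>z. indicator (wedge (b / a)) z * (\<alpha> * (a\<^sup>2 * (fst z)\<^sup>2) + \<beta> * (b\<^sup>2 * (snd z)\<^sup>2)))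
    (\<alpha> * a\<^sup>2 * (P + a * b / pi) + \<beta> * b\<^sup>2 * (P - a * b / pi))"
proof -
  note ab = correlating_coefficients[OF correlation_gt correlation_bounds(2), folded a_def b_def]
  have wedge_prob: "1/2 - arctan (b / a) / pi = P"
    by (simp add: ab(6) P_def field_simps)
  have "a\<^sup>2 + b\<^sup>2 = 1"
    using ab(3,4) by simp
  then have "1 + (b / a)\<^sup>2 = 1 / a\<^sup>2"
    using ab(1) by (simp add: field_simps)
  then have slope: "b / a / (pi * (1 + (b / a)\<^sup>2)) = a * b / pi"
    using ab(1) by (simp add: power2_eq_square)
  have "0 \<le> b / a"
    using ab(1,2) by simp
  note fst_sq = has_bochner_integral_wedge_fst_square[OF this, unfolded wedge_prob slope]
  have snd_sq: "has_bochner_integral std_normal_pair (\<lambda>z. b\<^sup>2 * (indicator (wedge (b / a))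
      z * (snd z)\<^sup>2))
      (b\<^sup>2 * (P - a * b / pi))"
  proof (cases "b = 0")
    case False
    then have "b / a > 0"
      using ab by simp
    then show ?thesis
      using has_bochner_integral_wedge_snd_square[of "b / a", unfolded wedge_prob slope]
      by (intro has_bochner_integral_mult_right) simp
  qed (simp add: has_bochner_integral_zero)
  have "has_bochner_integral std_normal_pair
      (\<lambda>z. (\<alpha> * a\<^sup>2) * (indicator (wedge (b / a)) z * (fst z)\<^sup>2) +
          \<beta> * (b\<^sup>2 * (indicator (wedge (b / a)) z * (snd z)\<^sup>2)))
      ((\<alpha> * a\<^sup>2) * (P + a * b / pi) + \<beta> * (b\<^sup>2 * (P - a * b / pi)))"
    by (intro has_bochner_integral_add has_bochner_integral_mult_right fst_sq snd_sq)
  then show ?thesis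
    by (simp add: algebra_simps)
qed

lemma orthant_quadratic_moments:
  shows "(\<integral>\<omega>. indicator orthant_event \<omega> * (X \<omega>)\<^sup>2 \<partial>M) =
      (pi / 2 + arcsin \<rho> + \<rho> * sqrt (1 - \<rho>\<^sup>2)) / (2 * pi)"
    and "(\<integral>\<omega>. indicator orthant_event \<omega> * (X \<omega> * Y \<omega>) \<partial>M) =
      (\<rho> * (pi / 2 + arcsin \<rho>) + sqrt (1 - \<rho>\<^sup>2)) / (2 * pi)"
proof -
  define a b where "a = sqrt ((1 + \<rho>) / 2)" and "b = sqrt ((1 - \<rho>) / 2)"
  define P where "P = (arcsin \<rho> + pi / 2) / (2 * pi)"
  note ab = correlating_coefficients[OF correlation_gt correlation_bounds(2), folded a_def b_def]
  note quadratic = has_bochner_integral_wedge_quadratic[folded a_def b_def P_def, THEN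
      has_bochner_integral_integral_eq]
  have map: "fst (correlating_map \<rho> z) = a * fst z + b * snd z" "snd (correlating_map \<rho> z) =
      a * fst z - b * snd z" for z
    by (simp_all add: correlating_map_def a_def b_def)
  have combine: "\<alpha> * a\<^sup>2 * (P + a * b / pi) + \<beta> * b\<^sup>2 * (P - a * b / pi) =
      (\<alpha> + \<beta>) / 2 * (P + \<rho> * (a * b) / pi) + (\<alpha> - \<beta>) / 2 * (\<rho> * P + a * b / pi)" for \<alpha> \<beta>
    by (simp add: ab(3,4) field_simps)
  have "2 * (\<integral>\<omega>. indicator orthant_event \<omega> * (X \<omega>)\<^sup>2 \<partial>M) =
      (\<integral>\<omega>. indicator orthant_event \<omega> * (X \<omega>)\<^sup>2 \<partial>M) + (\<integral>\<omega>. indicator orthant_event \<omega> * (Y \<omega>)\<^sup>2 \<partial>M)"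
    using integral_orthant_event(2)[of "\<lambda>p. (fst p)\<^sup>2"] by simp
  also have "\<dots> = (\<integral>\<omega>. indicator orthant_event \<omega> * ((X \<omega>)\<^sup>2 + (Y \<omega>)\<^sup>2) \<partial>M)"
    using integrable_orthant_event[OF integrable_moments(3)]
      integrable_orthant_event[OF integrable_moments(4)]
    by (simp add: distrib_left power2_eq_square)
  also have "\<dots> = (\<integral>z. indicator (wedge (b / a)) z * (2 * (a\<^sup>2 * (fst z)\<^sup>2) +
      2 * (b\<^sup>2 * (snd z)\<^sup>2)) \<partial>std_normal_pair)"
    unfolding integral_orthant_event_wedge[of "\<lambda>p. (fst p)\<^sup>2 + (snd p)\<^sup>2", simplified]
    by (simp add: map a_def[symmetric] b_def[symmetric] power2_eq_square algebra_simps)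
  also have "\<dots> = 2 * a\<^sup>2 * (P + a * b / pi) + 2 * b\<^sup>2 * (P - a * b / pi)"
    by (rule quadratic)
  also have "\<dots> = 2 * (P + \<rho> * (a * b) / pi)"
    unfolding combine by simp
  finally have second: "(\<integral>\<omega>. indicator orthant_event \<omega> * (X \<omega>)\<^sup>2 \<partial>M) = P + \<rho> * (a * b) / pi"
    by simp
  show "(\<integral>\<omega>. indicator orthant_event \<omega> * (X \<omega>)\<^sup>2 \<partial>M) =
      (pi / 2 + arcsin \<rho> + \<rho> * sqrt (1 - \<rho>\<^sup>2)) / (2 * pi)"
    unfolding second ab(5) P_def by (simp add: field_simps)
  have "(\<integral>\<omega>. indicator orthant_event \<omega> * (X \<omega> * Y \<omega>) \<partial>M) =
      (\<integral>z. indicator (wedge (b / a)) z * (1 * (a\<^sup>2 * (fst z)\<^sup>2) +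
          (-1) * (b\<^sup>2 * (snd z)\<^sup>2)) \<partial>std_normal_pair)"
    unfolding integral_orthant_event_wedge[of "\<lambda>p. fst p * snd p", simplified]
    by (simp add: map a_def[symmetric] b_def[symmetric] power2_eq_square algebra_simps)
  also have "\<dots> = 1 * a\<^sup>2 * (P + a * b / pi) + (-1) * b\<^sup>2 * (P - a * b / pi)"
    by (rule quadratic)
  also have "\<dots> = \<rho> * P + a * b / pi"
    unfolding combine by simp
  finally show "(\<integral>\<omega>. indicator orthant_event \<omega> * (X \<omega> * Y \<omega>) \<partial>M) =
      (\<rho> * (pi / 2 + arcsin \<rho>) + sqrt (1 - \<rho>\<^sup>2)) / (2 * pi)"
    by (simp add: ab(5) P_def field_simps)
qed

end

end

section \<open>Conditional moments and the mark characteristics\<close>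

lemma (in prob_space) cond_exp_event_square_ge:
  fixes Z :: "'a \<Rightarrow> real"
  assumes A: "A \<in> events" "prob A > 0"
    and integrable: "integrable M Z" "integrable M (\<lambda>\<omega>. (Z \<omega>)\<^sup>2)"
  shows "(cond_exp_event M Z A)\<^sup>2 \<le> cond_exp_event M (\<lambda>\<omega>. (Z \<omega>)\<^sup>2) A"
proof -
  define k where "k = cond_exp_event M Z A"
  have integrable_A: "integrable M (\<lambda>\<omega>. indicator A \<omega> *
      f \<omega>)" if "integrable M f" for f :: "'a \<Rightarrow> real"
    using integrable_mult_indicator[OF A(1) that] by simp
  have "integrable M (\<lambda>\<omega>. indicator A \<omega> :: real)"
    by (rule integrable_bounded[where K=1]) (use A(1) in \<open>auto split: split_indicator\<close>)
  have "0 \<le> (\<integral>\<omega>. indicator A \<omega> * (Z \<omega> - k)\<^sup>2 \<partial>M)"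
    by simp
  also have "\<dots> = (\<integral>\<omega>. indicator A \<omega> * (Z \<omega>)\<^sup>2 - (2 * k) * (indicator A \<omega> * Z \<omega>) +
      k\<^sup>2 * indicator A \<omega> \<partial>M)"
    by (rule Bochner_Integration.integral_cong) (simp_all add: power2_eq_square algebra_simps)
  also have "\<dots> = (\<integral>\<omega>. indicator A \<omega> * (Z \<omega>)\<^sup>2 - (2 * k) * (indicator A \<omega> * Z \<omega>) \<partial>M)
      + (\<integral>\<omega>. k\<^sup>2 * indicator A \<omega> \<partial>M)"
    using integrable_A[OF integrable(1)] integrable_A[OF integrable(2)] A(1)
        \<open>integrable M (\<lambda>\<omega>. indicator A \<omega>)\<close>
    by (intro Bochner_Integration.integral_add) auto
  also have "\<dots> = (\<integral>\<omega>. indicator A \<omega> * (Z \<omega>)\<^sup>2 \<partial>M) - 2 * k * (\<integral>\<omega>. indicator A \<omega> * Z \<omega> \<partial>M) + k\<^sup>2 * prob A"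
    using integrable_A[OF integrable(1)] integrable_A[OF integrable(2)] A(1)
        \<open>integrable M (\<lambda>\<omega>. indicator A \<omega>)\<close>
    by (subst Bochner_Integration.integral_diff) auto
  also have "\<dots> = prob A * (cond_exp_event M (\<lambda>\<omega>. (Z \<omega>)\<^sup>2) A - k\<^sup>2)"
    using A(2) by (simp add: k_def cond_exp_event_def power2_eq_square field_simps)
  finally show ?thesis
    using A(2) by (simp add: k_def zero_le_mult_iff)
qed

context standard_gaussian_pair
begin

lemma cond_exp_orthant_event:
  assumes "-1 < \<rho>"
  shows "cond_exp_event M X orthant_event = sqrt (pi / 2) * (1 + \<rho>) / (arcsin \<rho> + pi / 2)"
    and "cond_exp_event M (\<lambda>\<omega>. X \<omega> * Y \<omega>) orthant_event = \<rho> + sqrt (1 - \<rho>\<^sup>2) / (arcsin \<rho> + pi / 2)"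
    and "cond_exp_event M (\<lambda>\<omega>. (X \<omega>)\<^sup>2) orthant_event =
        1 + \<rho> * sqrt (1 - \<rho>\<^sup>2) / (arcsin \<rho> + pi / 2)"
proof -
  have "arcsin (-1) < arcsin \<rho>"
    by (rule arcsin_less_arcsin) (use assms correlation_bounds in auto)
  then have pos: "0 < arcsin \<rho> + pi / 2"
    by simp
  have "pi / sqrt (2 * pi) = sqrt (pi / 2)"
  proof -
    have "sqrt (pi / 2) * sqrt (2 * pi) = pi"
      by (simp add: real_sqrt_mult[symmetric])
    then show ?thesis
      by (simp add: field_simps)
  qed
  have "cond_exp_event M X orthant_event = (1 + \<rho>) / (2 * sqrt (2 * pi)) / ((arcsin \<rho> + pi / 2) / (2 * pi))"
    by (simp add: cond_exp_event_def measure_orthant_event[OF assms] orthant_first_moment[OF assms])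
  also have "\<dots> = pi / sqrt (2 * pi) * (1 + \<rho>) / (arcsin \<rho> + pi / 2)"
    by (simp add: divide_simps)
  finally show "cond_exp_event M X orthant_event = sqrt (pi / 2) * (1 + \<rho>) / (arcsin \<rho> + pi / 2)"
    unfolding \<open>pi / sqrt (2 * pi) = sqrt (pi / 2)\<close> .
  have "cond_exp_event M (\<lambda>\<omega>. X \<omega> * Y \<omega>) orthant_event =
      (\<rho> * (arcsin \<rho> + pi / 2) + sqrt (1 - \<rho>\<^sup>2)) / (2 * pi) / ((arcsin \<rho> + pi / 2) / (2 * pi))"
    and "cond_exp_event M (\<lambda>\<omega>. (X \<omega>)\<^sup>2) orthant_event =
      ((arcsin \<rho> + pi / 2) + \<rho> * sqrt (1 - \<rho>\<^sup>2)) / (2 * pi) / ((arcsin \<rho> + pi / 2) / (2 * pi))"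
    by (simp_all add: cond_exp_event_def measure_orthant_event[OF assms]
        orthant_quadratic_moments[OF assms] add_ac)
  then show "cond_exp_event M (\<lambda>\<omega>. X \<omega> * Y \<omega>) orthant_event =
      \<rho> + sqrt (1 - \<rho>\<^sup>2) / (arcsin \<rho> + pi / 2)"
    and "cond_exp_event M (\<lambda>\<omega>. (X \<omega>)\<^sup>2) orthant_event =
        1 + \<rho> * sqrt (1 - \<rho>\<^sup>2) / (arcsin \<rho> + pi / 2)"
    using pos by (simp_all add: divide_simps)
qed

lemma cond_exp_orthant_event_square_ge:
  assumes "-1 < \<rho>"
  shows "(cond_exp_event M X orthant_event)\<^sup>2 \<le> cond_exp_event M (\<lambda>\<omega>. (X \<omega>)\<^sup>2) orthant_event"
proof (rule cond_exp_event_square_ge)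
  have "arcsin (-1) < arcsin \<rho>"
    by (rule arcsin_less_arcsin) (use assms correlation_bounds in auto)
  then show "prob orthant_event > 0"
    by (simp add: measure_orthant_event[OF assms])
  show "integrable M (\<lambda>\<omega>. (X \<omega>)\<^sup>2)"
    using integrable_moments(3) by (simp add: power2_eq_square)
qed (simp_all add: integrable_moments)

end

lemma gaussian_field_standard_gaussian_pair:
  fixes Z :: "'a::real_normed_vector \<Rightarrow> 'w \<Rightarrow> real" and R :: "real \<Rightarrow> real"
  assumes gauss: "gaussian_field M Z"
    and centered: "\<And>x. (\<integral>\<omega>. Z x \<omega> \<partial>M) = 0"
    and cov: "\<And>x y. (\<integral>\<omega>. Z x \<omega> * Z y \<omega> \<partial>M) = R (norm (x - y))"
    and unit_var: "R 0 = 1"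
  shows "standard_gaussian_pair M (Z x) (Z y) (R (norm (x - y)))"
proof -
  have P: "prob_space M" and normal: "\<And>F c. finite F \<Longrightarrow> real_normal_rv M (\<lambda>\<omega>. \<Sum>x\<in>F. c x * Z x \<omega>)"
    using gauss unfolding gaussian_field_def by auto
  have "real_normal_rv M (\<lambda>\<omega>. s * Z x \<omega> + t * Z y \<omega>)" for s t
  proof (cases "x = y")
    case True
    then show ?thesis
      using normal[of "{x}" "\<lambda>_. s + t"] by (simp add: algebra_simps)
  next
    case False
    then show ?thesis
      using normal[of "{x, y}" "\<lambda>z. if z = x then s else t"] by simp
  qed
  then show ?thesis
    using P centered cov[of x x] cov[of y y] cov[of x y] unit_var
    by (simp add: standard_gaussian_pair_def standard_gaussian_pair_axioms_def)
qed

lemma mark_characteristics_closed_forms: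
  fixes \<rho> e c v m :: real
  assumes \<rho>: "-1 < \<rho>" "\<rho> \<le> 1"
    and e: "e = sqrt (pi / 2) * (1 + \<rho>) / (arcsin \<rho> + pi / 2)"
    and c: "c = \<rho> + sqrt (1 - \<rho>\<^sup>2) / (arcsin \<rho> + pi / 2)"
    and v: "v = 1 + \<rho> * sqrt (1 - \<rho>\<^sup>2) / (arcsin \<rho> + pi / 2)"
    and m: "m = sqrt (pi / 2) * (1 + 1) / (arcsin 1 + pi / 2)"
    and variance: "e\<^sup>2 \<le> v"
  defines "A \<equiv> arcsin \<rho> + pi / 2" and "s \<equiv> sqrt (1 - \<rho>\<^sup>2)"
  shows "c - e * e = \<rho> + s / A - pi / 2 * (1 + \<rho>)\<^sup>2 / A\<^sup>2"
    and "(v + v) / 2 - c = (1 - \<rho>) * (1 - s / A)"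
    and "c / m\<^sup>2 = pi / 2 * (\<rho> + s / A)"
    and "(c - e * e) / (sqrt (v - e\<^sup>2) * sqrt (v - e\<^sup>2)) =
      (\<rho> * A\<^sup>2 + s * A - pi / 2 * (1 + \<rho>)\<^sup>2) / (A\<^sup>2 + \<rho> * s * A - pi / 2 * (1 + \<rho>)\<^sup>2)"
proof -
  have "arcsin (-1) < arcsin \<rho>"
    by (rule arcsin_less_arcsin) (use \<rho> in auto)
  then have A: "A > 0"
    by (simp add: A_def)
  have "sqrt (pi / 2) * sqrt (pi / 2) = pi / 2"
    by simp
  then have e2: "e * e = pi / 2 * (1 + \<rho>)\<^sup>2 / A\<^sup>2"
    using A unfolding e A_def[symmetric] by (simp add: power2_eq_square field_simps)
  have cv: "c = \<rho> + s / A" "v = 1 + \<rho> * s / A"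
    by (simp_all add: c v A_def s_def)
  show "c - e * e = \<rho> + s / A - pi / 2 * (1 + \<rho>)\<^sup>2 / A\<^sup>2"
    by (simp add: e2 cv)
  show "(v + v) / 2 - c = (1 - \<rho>) * (1 - s / A)"
    using A by (simp add: cv field_simps)
  have "m\<^sup>2 = 2 / pi"
    by (simp add: m power_divide power_mult_distrib power2_eq_square)
  then show "c / m\<^sup>2 = pi / 2 * (\<rho> + s / A)"
    by (simp add: cv)
  have "sqrt (v - e\<^sup>2) * sqrt (v - e\<^sup>2) = v - e * e"
    using variance by (simp add: power2_eq_square)
  moreover have "c - e * e = (\<rho> * A\<^sup>2 + s * A - pi / 2 * (1 + \<rho>)\<^sup>2) / A\<^sup>2"
    and "v - e * e = (A\<^sup>2 + \<rho> * s * A - pi / 2 * (1 + \<rho>)\<^sup>2) / A\<^sup>2"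
    using A by (simp_all add: e2 cv field_simps power2_eq_square)
  ultimately show "(c - e * e) / (sqrt (v - e\<^sup>2) * sqrt (v - e\<^sup>2)) =
      (\<rho> * A\<^sup>2 + s * A - pi / 2 * (1 + \<rho>)\<^sup>2) / (A\<^sup>2 + \<rho> * s * A - pi / 2 * (1 + \<rho>)\<^sup>2)"
    using A by simp
qed

lemma gaussian_field_conditional_moments:
  fixes Z :: "'a::real_normed_vector \<Rightarrow> 'w \<Rightarrow> real" and R :: "real \<Rightarrow> real"
  assumes gauss: "gaussian_field M Z"
    and centered: "\<And>x. (\<integral>\<omega>. Z x \<omega> \<partial>M) = 0"
    and cov: "\<And>x y. (\<integral>\<omega>. Z x \<omega> * Z y \<omega> \<partial>M) = R (norm (x - y))"
    and unit_var: "R 0 = 1"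
    and nondeg: "measure M (event_A M Z h) > 0"
  defines "\<rho> \<equiv> R (norm h)"
  shows "-1 < \<rho>" "\<rho> \<le> 1"
    and "kappa_e M Z h = sqrt (pi / 2) * (1 + \<rho>) / (arcsin \<rho> + pi / 2)"
      "kappa_e M Z (-h) = sqrt (pi / 2) * (1 + \<rho>) / (arcsin \<rho> + pi / 2)"
      "kappa_c M Z h = \<rho> + sqrt (1 - \<rho>\<^sup>2) / (arcsin \<rho> + pi / 2)"
      "kappa_v M Z h = 1 + \<rho> * sqrt (1 - \<rho>\<^sup>2) / (arcsin \<rho> + pi / 2)"
      "kappa_v M Z (-h) = 1 + \<rho> * sqrt (1 - \<rho>\<^sup>2) / (arcsin \<rho> + pi / 2)"
      "mean_mark M Z = sqrt (pi / 2) * (1 + 1) / (arcsin 1 + pi / 2)"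
    and "(kappa_e M Z h)\<^sup>2 \<le> kappa_v M Z h"
proof -
  note pair = gaussian_field_standard_gaussian_pair[OF gauss centered cov unit_var]
  interpret plus: standard_gaussian_pair M "Z 0" "Z h" \<rho>
    using pair[of 0 h] by (simp add: \<rho>_def)
  interpret minus: standard_gaussian_pair M "Z 0" "Z (-h)" \<rho>
    using pair[of 0 "-h"] by (simp add: \<rho>_def)
  interpret diagonal: standard_gaussian_pair M "Z 0" "Z 0" 1
    using pair[of 0 0] unit_var by simp
  have events: "event_A M Z h = plus.orthant_event" "event_A M Z (-h) = minus.orthant_event"
    "{\<omega> \<in> space M. Z 0 \<omega> \<ge> 0} = diagonal.orthant_event"
    by (simp_all add: event_A_def plus.orthant_event_def minus.orthant_event_def
        diagonal.orthant_event_def)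
  show \<rho>: "-1 < \<rho>" "\<rho> \<le> 1"
    using plus.correlation_gt_minus_one nondeg plus.correlation_bounds by (simp_all add: events)
  show "kappa_e M Z h = sqrt (pi / 2) * (1 + \<rho>) / (arcsin \<rho> + pi / 2)"
    "kappa_e M Z (-h) = sqrt (pi / 2) * (1 + \<rho>) / (arcsin \<rho> + pi / 2)"
    "kappa_c M Z h = \<rho> + sqrt (1 - \<rho>\<^sup>2) / (arcsin \<rho> + pi / 2)"
    "kappa_v M Z h = 1 + \<rho> * sqrt (1 - \<rho>\<^sup>2) / (arcsin \<rho> + pi / 2)"
    "kappa_v M Z (-h) = 1 + \<rho> * sqrt (1 - \<rho>\<^sup>2) / (arcsin \<rho> + pi / 2)"
    "mean_mark M Z = sqrt (pi / 2) * (1 + 1) / (arcsin 1 + pi / 2)"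
    using plus.cond_exp_orthant_event[OF \<rho>(1)] minus.cond_exp_orthant_event[OF \<rho>(1)]
      diagonal.cond_exp_orthant_event(1)
    by (simp_all add: kappa_e_def kappa_c_def kappa_v_def mean_mark_def events)
  show "(kappa_e M Z h)\<^sup>2 \<le> kappa_v M Z h"
    using plus.cond_exp_orthant_event_square_ge[OF \<rho>(1)] by (simp add: kappa_e_def kappa_v_def events)
qed

theorem theorem4p1:
  fixes M :: "'w measure" and Z :: "'a::euclidean_space \<Rightarrow> 'w \<Rightarrow> real"
    and R :: "real \<Rightarrow> real" and h :: 'a and r :: real
  assumes gauss: "gaussian_field M Z"
    and centered: "\<And>x. (\<integral>\<omega>. Z x \<omega> \<partial>M) = 0"
    and cov: "\<And>x y. (\<integral>\<omega>. Z x \<omega> * Z y \<omega> \<partial>M) = R (norm (x - y))"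
    and unit_var: "R 0 = 1"
    and r_def: "r = norm h"
    and nondeg: "measure M (event_A M Z h) > 0"
  shows "(mark_E M Z h = sqrt (pi / 2) * (1 + R r) / (arcsin (R r) + pi / 2)) \<and>
      (mark_cov M Z h = R r + sqrt (1 - (R r)\<^sup>2) / (arcsin (R r) + pi / 2)
           - pi / 2 * (1 + R r)\<^sup>2 / (arcsin (R r) + pi / 2)\<^sup>2) \<and>
      (mark_variogram M Z h = (1 - R r) * (1 - sqrt (1 - (R r)\<^sup>2) / (arcsin (R r) + pi / 2))) \<and>
      (stoyan_kmm M Z h = pi / 2 * (R r + sqrt (1 - (R r)\<^sup>2) / (arcsin (R r) + pi / 2))) \<and>
      (mark_cor M Z h =
           (R r * (arcsin (R r) + pi / 2)\<^sup>2 + sqrt (1 - (R r)\<^sup>2) * (arcsin (R r) + pi / 2)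
              - pi / 2 * (1 + R r)\<^sup>2) /
           ((arcsin (R r) + pi / 2)\<^sup>2 + R r * sqrt (1 - (R r)\<^sup>2) * (arcsin (R r) + pi / 2)
              - pi / 2 * (1 + R r)\<^sup>2))"
proof -
  note moments = gaussian_field_conditional_moments[OF gauss centered cov unit_var nondeg, folded r_def]
  have "(sqrt (pi / 2) * (1 + R r) / (arcsin (R r) + pi / 2))\<^sup>2
      \<le> 1 + R r * sqrt (1 - (R r)\<^sup>2) / (arcsin (R r) + pi / 2)"
    using moments(9) unfolding moments(3,6) .
  note closed_forms = mark_characteristics_closed_forms[OF moments(1,2) refl refl refl refl this]
  show ?thesis
    unfolding mark_E_def mark_cov_def mark_variogram_def stoyan_kmm_def mark_cor_def moments(3-8)
    by (intro conjI refl closed_forms)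
qed

end
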